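(* There exists a constant $C_{\rm fourier}>0$ such that for every $u\in H^1_\#(Y;\mathbb{C}^3)$ and every $\chi\in Y'\setminus\{0\}$: $$\|u\|_{L^2(Y)}\le\frac{C_{\rm fourier}}{|\chi|}\|(\operatorname{sym}\nabla+iX_\chi)u\|_{L^2(Y)},\quad \|\nabla u\|_{L^2(Y)}\le C_{\rm fourier}\|(\operatorname{sym}\nabla+iX_\chi)u\|_{L^2(Y)},\quad \Big\|u-\int_Yu\Big\|_{L^2(Y)}\le C_{\rm fourier}\|(\operatorname{sym}\nabla+iX_\chi)u\|_{L^2(Y)}.$$
   Context: $Y=[0,1)^3$ (unit volume), $Y'=[-\pi,\pi)^3$. $H^1_\#(Y;\mathbb{C}^3)$ is the closure in $H^1$ of smooth $\mathbb{Z}^3$-periodic $\mathbb{C}^3$-valued functions. $X_\chi u=\operatorname{sym}(u\chi^\top)$, $\operatorname{sym}A=\frac12(A+A^\top)$; matrix norms are Frobenius. *)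

theory Defs
  imports "HOL-Analysis.Analysis"
begin

definition cellY :: "(real^3) set" where
  "cellY = {x. \<forall>i. 0 \<le> x$i \<and> x$i < 1}"

definition cellY' :: "(real^3) set" where
  "cellY' = {x. \<forall>i. - pi \<le> x$i \<and> x$i < pi}"

definition lattice3 :: "(real^3) set" where
  "lattice3 = {k. \<forall>i. k$i \<in> \<int>}"

definition pderiv3 :: "(real^3 \<Rightarrow> 'b::real_normed_vector) \<Rightarrow> 3 \<Rightarrow> real^3 \<Rightarrow> 'b" where
  "pderiv3 f j x = vector_derivative (\<lambda>t. f (x + t *\<^sub>R axis j 1)) (at 0)"

coinductive smooth3 :: "(real^3 \<Rightarrow> complex^3) \<Rightarrow> bool" where
  "continuous_on UNIV f \<Longrightarrow>
   (\<And>j. (\<forall>x. ((\<lambda>t. f (x + t *\<^sub>R axis j 1)) has_vector_derivative pderiv3 f j x) (at 0))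
         \<and> smooth3 (pderiv3 f j)) \<Longrightarrow> smooth3 f"

definition periodic3 :: "(real^3 \<Rightarrow> 'b) \<Rightarrow> bool" where
  "periodic3 f \<longleftrightarrow> (\<forall>x. \<forall>k\<in>lattice3. f (x + k) = f x)"

definition grad3 :: "(real^3 \<Rightarrow> complex^3) \<Rightarrow> real^3 \<Rightarrow> complex^3^3" where
  "grad3 f x = (\<chi> i j. pderiv3 f j x $ i)"

text \<open>L^2(Y) norm (matrix norms are Frobenius = norm on complex^3^3).\<close>
definition L2Y :: "(real^3 \<Rightarrow> 'b::real_normed_vector) \<Rightarrow> real" where
  "L2Y f = sqrt (integral cellY (\<lambda>x. (norm (f x))\<^sup>2))"

definition H1per :: "(real^3 \<Rightarrow> complex^3) \<Rightarrow> (real^3 \<Rightarrow> complex^3^3) \<Rightarrow> bool" where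
  "H1per u Du \<longleftrightarrow>
     u measurable_on cellY \<and> (\<lambda>x. (norm (u x))\<^sup>2) integrable_on cellY \<and>
     Du measurable_on cellY \<and> (\<lambda>x. (norm (Du x))\<^sup>2) integrable_on cellY \<and>
     (\<exists>\<phi> :: nat \<Rightarrow> real^3 \<Rightarrow> complex^3.
        (\<forall>n. smooth3 (\<phi> n) \<and> periodic3 (\<phi> n)) \<and>
        (\<lambda>n. L2Y (\<lambda>x. \<phi> n x - u x)) \<longlonglongrightarrow> 0 \<and>
        (\<lambda>n. L2Y (\<lambda>x. grad3 (\<phi> n) x - Du x)) \<longlonglongrightarrow> 0)"

definition symm :: "complex^3^3 \<Rightarrow> complex^3^3" where
  "symm A = (1/2) *\<^sub>R (A + transpose A)"

definition Xchi :: "real^3 \<Rightarrow> complex^3 \<Rightarrow> complex^3^3" where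
  "Xchi c v = symm (\<chi> i j. v $ i * complex_of_real (c $ j))"

definition imul :: "complex^3^3 \<Rightarrow> complex^3^3" where
  "imul A = (\<chi> i j. \<i> * A $ i $ j)"

end

theory Submission
  imports Defs
begin

text \<open>
  Conjugation by the phase \<open>exp (i \<chi> \<bullet> x)\<close> turns \<open>sym \<nabla> + i X\<^sub>\<chi>\<close> into the symmetric part
  of the twisted gradient \<open>D\<^sub>j u\<^sub>i = \<partial>\<^sub>j u\<^sub>i + i \<chi>\<^sub>j u\<^sub>i\<close>. For smooth periodic \<open>u\<close>, two
  integrations by parts give Korn's inequality \<open>\<integral> |D u|\<^sup>2 \<le> 2 \<integral> |sym D u|\<^sup>2\<close>. On the other
  hand \<open>|D\<^sub>j u|\<close> controls \<open>|\<chi>\<^sub>j| |u|\<close> in mean square, because \<open>|\<chi>\<^sub>j| \<le> \<pi>\<close> keeps the phase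
  \<open>exp (i \<chi>\<^sub>j)\<close> picked up over one period away from \<open>1\<close>; this bounds \<open>|\<chi>|\<^sup>2 \<integral> |u|\<^sup>2\<close> and then
  \<open>\<integral> |\<nabla>u|\<^sup>2\<close> by \<open>\<integral> |sym D u|\<^sup>2\<close>. The estimate for \<open>u - \<integral> u\<close> follows from a
  Poincare-Wirtinger inequality, proved by averaging along the three axes in turn. All
  estimates are proved for smooth periodic functions and pass to \<open>H\<^sup>1\<^sub>#\<close> by density.
\<close>

section \<open>Calculus along coordinate lines\<close>

lemma mem_unit_cube_translate:
  fixes k :: "'a::euclidean_space"
  assumes k: "k \<in> Basis"
  shows "x + t *\<^sub>R k \<in> cbox 0 One \<longleftrightarrow>
    (\<forall>i\<in>Basis - {k}. 0 \<le> x \<bullet> i \<and> x \<bullet> i \<le> 1) \<and> 0 \<le> x \<bullet> k + t \<and> x \<bullet> k + t \<le> 1"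
  using k by (auto simp: mem_box inner_add_left inner_Basis split: if_splits)

lemma mem_unit_cube_iff:
  fixes k :: "'a::euclidean_space"
  assumes k: "k \<in> Basis"
  shows "x \<in> cbox 0 One \<longleftrightarrow>
    (\<forall>i\<in>Basis - {k}. 0 \<le> x \<bullet> i \<and> x \<bullet> i \<le> 1) \<and> 0 \<le> x \<bullet> k \<and> x \<bullet> k \<le> 1"
  using mem_unit_cube_translate[OF k, of x 0] by simp

lemma unit_cube_slab_translate:
  fixes k :: "'a::euclidean_space"
  assumes k: "k \<in> Basis" and s: "0 \<le> s" "s \<le> 1"
  shows "(\<lambda>x. x - s *\<^sub>R k) ` (cbox 0 One \<inter> {x. s \<le> x \<bullet> k}) = cbox 0 One \<inter> {x. x \<bullet> k \<le> 1 - s}"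
    and "(\<lambda>x. x - (s - 1) *\<^sub>R k) ` (cbox 0 One \<inter> {x. x \<bullet> k \<le> s}) = cbox 0 One \<inter> {x. 1 - s \<le> x \<bullet> k}"
proof -
  have shift: "(\<lambda>x. x - t *\<^sub>R k) ` S = {x. x + t *\<^sub>R k \<in> S}" for t S
    by (auto simp: image_iff) (metis add_diff_cancel)
  have xk: "(x + t *\<^sub>R k) \<bullet> k = x \<bullet> k + t" for x t
    using k by (simp add: inner_add_left)
  have xi: "(x + t *\<^sub>R k) \<bullet> i = x \<bullet> i" if "i \<in> Basis - {k}" for x t i
    using k that by (auto simp: inner_add_left inner_Basis)
  show "(\<lambda>x. x - s *\<^sub>R k) ` (cbox 0 One \<inter> {x. s \<le> x \<bullet> k}) = cbox 0 One \<inter> {x. x \<bullet> k \<le> 1 - s}"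
    unfolding shift using s by (auto simp: mem_unit_cube_translate[OF k] mem_unit_cube_iff[OF k] xk xi)
  show "(\<lambda>x. x - (s - 1) *\<^sub>R k) ` (cbox 0 One \<inter> {x. x \<bullet> k \<le> s}) = cbox 0 One \<inter> {x. 1 - s \<le> x \<bullet> k}"
    unfolding shift using s by (auto simp: mem_unit_cube_translate[OF k] mem_unit_cube_iff[OF k] xk xi)
qed

text \<open>Cut the cube at \<open>x \<bullet> k = s\<close>: translating by \<open>s k\<close> moves the upper slab onto the
  lower part of the cube and, by periodicity, the lower slab onto the upper part.\<close>

lemma integral_unit_cube_translate_periodic:
  fixes F :: "'a::euclidean_space \<Rightarrow> 'b::banach"
  assumes cont: "continuous_on UNIV F" and per: "\<And>x. F (x + k) = F x"
    and k: "k \<in> Basis" and s: "0 \<le> s" "s \<le> 1"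
  shows "integral (cbox 0 One) (\<lambda>x. F (x + s *\<^sub>R k)) = integral (cbox 0 One) F"
proof -
  let ?Q = "cbox (0::'a) One"
  let ?G = "\<lambda>x. F (x + s *\<^sub>R k)"
  have int_F: "F integrable_on cbox a b" for a b
    by (rule integrable_continuous) (auto intro: continuous_on_subset[OF cont])
  have int_G: "?G integrable_on cbox a b" for a b
    by (intro integrable_continuous continuous_on_compose2[OF cont] continuous_intros) auto
  have shift: "((\<lambda>x. F (x + c)) has_integral integral S F) ((\<lambda>x. x - c) ` S)"
    if "S = cbox a b" for S a b c
  proof -
    have "((\<lambda>x. F (1 *\<^sub>R x + c)) has_integral (1 / \<bar>1\<bar> ^ DIM('a)) *\<^sub>R integral S F)
        ((\<lambda>x. (1 / 1) *\<^sub>R x + - ((1 / 1) *\<^sub>R c)) ` S)"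
      unfolding that by (intro has_integral_affinity integrable_integral int_F) simp
    then show ?thesis by simp
  qed
  obtain a b where ab: "?Q \<inter> {x. s \<le> x \<bullet> k} = cbox a b"
    by (rule that[OF interval_split(2)[OF k]])
  obtain a' b' where ab': "?Q \<inter> {x. x \<bullet> k \<le> s} = cbox a' b'"
    by (rule that[OF interval_split(1)[OF k]])
  have upper: "(?G has_integral integral (?Q \<inter> {x. s \<le> x \<bullet> k}) F) (?Q \<inter> {x. x \<bullet> k \<le> 1 - s})"
    using shift[OF ab, of "s *\<^sub>R k"] unfolding unit_cube_slab_translate(1)[OF k s] .
  have "((\<lambda>x. F (x + (s - 1) *\<^sub>R k)) has_integral integral (?Q \<inter> {x. x \<bullet> k \<le> s}) F) (?Q \<inter> {x. 1 - s \<le> x \<bullet> k})"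
    using shift[OF ab', of "(s - 1) *\<^sub>R k"] unfolding unit_cube_slab_translate(2)[OF k s] .
  moreover have "F (x + (s - 1) *\<^sub>R k) = ?G x" for x
    using per[of "x + (s - 1) *\<^sub>R k"] by (simp add: algebra_simps)
  ultimately have lower: "(?G has_integral integral (?Q \<inter> {x. x \<bullet> k \<le> s}) F) (?Q \<inter> {x. 1 - s \<le> x \<bullet> k})"
    by simp
  have "integral ?Q ?G = integral (?Q \<inter> {x. x \<bullet> k \<le> 1 - s}) ?G + integral (?Q \<inter> {x. 1 - s \<le> x \<bullet> k}) ?G"
    by (rule integral_split[OF int_G k])
  also have "\<dots> = integral (?Q \<inter> {x. s \<le> x \<bullet> k}) F + integral (?Q \<inter> {x. x \<bullet> k \<le> s}) F"
    using upper lower by (simp add: integral_unique)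
  also have "\<dots> = integral ?Q F"
    using integral_split[OF int_F k, where c = s] by (simp add: add.commute)
  finally show ?thesis .
qed

lemma integral_unit_cube_line_average:
  fixes F :: "'a::euclidean_space \<Rightarrow> 'b::banach"
  assumes cont: "continuous_on UNIV F" and per: "\<And>x. F (x + k) = F x" and k: "k \<in> Basis"
  shows "integral (cbox 0 One) (\<lambda>x. integral {0..1} (\<lambda>t. F (x + t *\<^sub>R k))) = integral (cbox 0 One) F"
proof -
  have "continuous_on (cbox (0, 0) (One, 1)) (\<lambda>(x, t::real). F (x + t *\<^sub>R k))"
    unfolding case_prod_unfold by (intro continuous_on_compose2[OF cont] continuous_intros) auto
  then have "integral (cbox 0 One) (\<lambda>x. integral (cbox 0 1) (\<lambda>t. F (x + t *\<^sub>R k)))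
       = integral (cbox 0 1) (\<lambda>t. integral (cbox 0 One) (\<lambda>x. F (x + t *\<^sub>R k)))"
    by (rule integral_swap_continuous)
  also have "\<dots> = integral (cbox 0 (1::real)) (\<lambda>t. integral (cbox 0 One) F)"
    by (rule integral_cong) (auto intro!: integral_unit_cube_translate_periodic cont per k)
  finally show ?thesis by simp
qed

lemma has_vector_derivative_along_line:
  fixes F :: "'a::real_normed_vector \<Rightarrow> 'b::real_normed_vector"
  assumes "\<And>x. ((\<lambda>t. F (x + t *\<^sub>R e)) has_vector_derivative G x) (at 0)"
  shows "((\<lambda>t. F (x + t *\<^sub>R e)) has_vector_derivative G (x + t *\<^sub>R e)) (at t)"
proof -
  have "((\<lambda>r. F ((x + t *\<^sub>R e) + r *\<^sub>R e)) \<circ> (\<lambda>t'. t' - t)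
      has_vector_derivative 1 *\<^sub>R G (x + t *\<^sub>R e)) (at t)"
    by (rule vector_diff_chain_at) (use assms in \<open>auto intro!: derivative_eq_intros\<close>)
  moreover have "(\<lambda>r. F ((x + t *\<^sub>R e) + r *\<^sub>R e)) \<circ> (\<lambda>t'. t' - t) = (\<lambda>t'. F (x + t' *\<^sub>R e))"
    by (auto simp: algebra_simps)
  ultimately show ?thesis by simp
qed

lemma has_integral_derivative_along_line:
  fixes F :: "'a::real_normed_vector \<Rightarrow> 'b::banach"
  assumes "\<And>x. ((\<lambda>t. F (x + t *\<^sub>R e)) has_vector_derivative G x) (at 0)" and "a \<le> b"
  shows "((\<lambda>t. G (x + t *\<^sub>R e)) has_integral F (x + b *\<^sub>R e) - F (x + a *\<^sub>R e)) {a..b}"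
  using assms(2) has_vector_derivative_along_line[OF assms(1)]
  by (intro fundamental_theorem_of_calculus) (auto intro: has_vector_derivative_at_within)

lemma integral_unit_cube_periodic_derivative:
  fixes h :: "'a::euclidean_space \<Rightarrow> 'b::banach"
  assumes k: "k \<in> Basis" and per: "\<And>x. h (x + k) = h x"
    and deriv: "\<And>x. ((\<lambda>t. h (x + t *\<^sub>R k)) has_vector_derivative h' x) (at 0)"
    and cont: "continuous_on UNIV h'" and per': "\<And>x. h' (x + k) = h' x"
  shows "integral (cbox 0 One) h' = 0"
proof -
  have "integral {0..1} (\<lambda>t. h' (x + t *\<^sub>R k)) = 0" for x
    using has_integral_derivative_along_line[OF deriv, of 0 1 x] per[of x] by (simp add: integral_unique)
  then show ?thesis
    using integral_unit_cube_line_average[OF cont per' k] by simp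
qed

lemma double_integral_mixed_derivative:
  fixes f :: "'a::real_normed_vector \<Rightarrow> 'b::banach"
  assumes du: "\<And>x. ((\<lambda>t. f (x + t *\<^sub>R u)) has_vector_derivative Fu x) (at 0)"
    and duv: "\<And>x. ((\<lambda>t. Fu (x + t *\<^sub>R v)) has_vector_derivative Fuv x) (at 0)"
    and r: "0 \<le> r"
  shows "integral {0..r} (\<lambda>s. integral {0..r} (\<lambda>t. Fuv (x + s *\<^sub>R u + t *\<^sub>R v)))
    = f (x + r *\<^sub>R u + r *\<^sub>R v) - f (x + r *\<^sub>R u) - f (x + r *\<^sub>R v) + f x"
proof -
  have inner: "integral {0..r} (\<lambda>t. Fuv (x + s *\<^sub>R u + t *\<^sub>R v))
      = Fu (x + r *\<^sub>R v + s *\<^sub>R u) - Fu (x + s *\<^sub>R u)" for s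
    using has_integral_derivative_along_line[OF duv r, of "x + s *\<^sub>R u"]
    by (simp add: integral_unique algebra_simps)
  have "((\<lambda>s. Fu (x + r *\<^sub>R v + s *\<^sub>R u) - Fu (x + s *\<^sub>R u)) has_integral
      (f (x + r *\<^sub>R v + r *\<^sub>R u) - f (x + r *\<^sub>R v)) - (f (x + r *\<^sub>R u) - f x)) {0..r}"
    using has_integral_derivative_along_line[OF du r, of "x + r *\<^sub>R v"]
      has_integral_derivative_along_line[OF du r, of x]
    by (intro has_integral_diff) simp_all
  then show ?thesis
    unfolding inner by (simp add: integral_unique algebra_simps)
qed

lemma integrable_on_square_slices:
  fixes H :: "'a::real_normed_vector \<Rightarrow> 'b::banach"
  assumes cont: "continuous_on UNIV H"
  shows "(\<lambda>t. H (x + s *\<^sub>R u + t *\<^sub>R v)) integrable_on {a..b}"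
    and "(\<lambda>s. integral {a..b} (\<lambda>t. H (x + s *\<^sub>R u + t *\<^sub>R v))) integrable_on {c..d}"
proof -
  show "(\<lambda>t. H (x + s *\<^sub>R u + t *\<^sub>R v)) integrable_on {a..b}"
    by (intro integrable_continuous_interval continuous_on_compose2[OF cont] continuous_intros) auto
  have "continuous_on ({c..d} \<times> cbox a b) (\<lambda>(s, t). H (x + s *\<^sub>R u + t *\<^sub>R v))"
    unfolding case_prod_unfold by (intro continuous_on_compose2[OF cont] continuous_intros) auto
  from integral_continuous_on_param[OF this]
  show "(\<lambda>s. integral {a..b} (\<lambda>t. H (x + s *\<^sub>R u + t *\<^sub>R v))) integrable_on {c..d}"
    by (simp add: integrable_continuous_interval)
qed

lemma double_integral_diff:
  fixes H K :: "'a::real_normed_vector \<Rightarrow> 'b::banach"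
  assumes "continuous_on UNIV H" "continuous_on UNIV K"
  shows "integral {0..r} (\<lambda>s. integral {0..r} (\<lambda>t. H (x + s *\<^sub>R u + t *\<^sub>R v) - K (x + s *\<^sub>R u + t *\<^sub>R v)))
    = integral {0..r} (\<lambda>s. integral {0..r} (\<lambda>t. H (x + s *\<^sub>R u + t *\<^sub>R v)))
      - integral {0..r} (\<lambda>s. integral {0..r} (\<lambda>t. K (x + s *\<^sub>R u + t *\<^sub>R v)))"
  using assms
  by (simp add: integral_diff integrable_on_square_slices del: atLeastAtMost_iff)

lemma continuous_on_square_near:
  fixes G :: "'a::real_normed_vector \<Rightarrow> 'b::real_normed_vector"
  assumes cont: "continuous_on UNIV G" and e: "e > 0"
  obtains r where "r > 0"
    and "\<And>s t. s \<in> {0..r} \<Longrightarrow> t \<in> {0..r} \<Longrightarrow> norm (G x - G (x + s *\<^sub>R u + t *\<^sub>R v)) \<le> e"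
proof -
  obtain d where d: "d > 0" "\<And>y. dist y x < d \<Longrightarrow> dist (G y) (G x) < e"
    using cont e unfolding continuous_on_iff by (metis UNIV_I)
  define r where "r = d / (2 * (norm u + norm v + 1))"
  have pos: "0 < norm u + norm v + 1"
    by (intro add_nonneg_pos add_nonneg_nonneg) auto
  have r: "r > 0" using d pos by (simp add: r_def)
  then have "r * (norm u + norm v) \<le> r * (norm u + norm v + 1)" by simp
  also have "\<dots> = d / 2" using pos by (simp add: r_def field_simps)
  finally have r_small: "r * (norm u + norm v) < d" using d by simp
  show ?thesis
  proof
    show "r > 0" by (rule r)
    fix s t assume "s \<in> {0..r}" "t \<in> {0..r}"
    then have "norm (s *\<^sub>R u + t *\<^sub>R v) \<le> r * norm u + r * norm v"
      using norm_triangle_ineq[of "s *\<^sub>R u" "t *\<^sub>R v"] mult_right_mono[of s r "norm u"]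
        mult_right_mono[of t r "norm v"] by auto
    then have "dist (x + s *\<^sub>R u + t *\<^sub>R v) x < d"
      using r_small by (simp add: dist_norm algebra_simps)
    then have "dist (G (x + s *\<^sub>R u + t *\<^sub>R v)) (G x) < e" by (rule d(2))
    then show "norm (G x - G (x + s *\<^sub>R u + t *\<^sub>R v)) \<le> e"
      by (simp add: dist_norm norm_minus_commute)
  qed
qed

lemma continuous_zero_if_square_integrals_vanish:
  fixes G :: "'a::real_normed_vector \<Rightarrow> 'b::banach"
  assumes cont: "continuous_on UNIV G"
    and vanish: "\<And>r. 0 < r \<Longrightarrow> integral {0..r} (\<lambda>s. integral {0..r} (\<lambda>t. G (x + s *\<^sub>R u + t *\<^sub>R v))) = 0"
  shows "G x = 0"
proof (rule ccontr)
  assume "G x \<noteq> 0"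
  define e where "e = norm (G x) / 2"
  have e: "e > 0" using \<open>G x \<noteq> 0\<close> by (simp add: e_def)
  obtain r where r: "r > 0"
    and near: "\<And>s t. s \<in> {0..r} \<Longrightarrow> t \<in> {0..r} \<Longrightarrow> norm (G x - G (x + s *\<^sub>R u + t *\<^sub>R v)) \<le> e"
    using continuous_on_square_near[OF cont e] by blast
  let ?K = "\<lambda>y. G x - G y"
  have cont_K: "continuous_on UNIV ?K" by (intro continuous_intros cont)
  have "integral {0..r} (\<lambda>s. integral {0..r} (\<lambda>t. ?K (x + s *\<^sub>R u + t *\<^sub>R v))) = (r * r) *\<^sub>R G x"
    using double_integral_diff[OF continuous_on_const cont, where r = r and x = x and u = u and v = v]
      vanish[OF r] r by simp
  with integrable_on_square_slices(2)[OF cont_K, where x = x and u = u and v = v and a = 0 and b = r and c = 0 and d = r]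
  have outer: "((\<lambda>s. integral {0..r} (\<lambda>t. ?K (x + s *\<^sub>R u + t *\<^sub>R v))) has_integral (r * r) *\<^sub>R G x) (cbox 0 r)"
    by (metis box_real(2) has_integral_integral)
  have inner: "norm (integral {0..r} (\<lambda>t. ?K (x + s *\<^sub>R u + t *\<^sub>R v))) \<le> e * r" if "s \<in> cbox 0 r" for s
  proof -
    have "((\<lambda>t. ?K (x + s *\<^sub>R u + t *\<^sub>R v)) has_integral integral {0..r} (\<lambda>t. ?K (x + s *\<^sub>R u + t *\<^sub>R v))) (cbox 0 r)"
      using integrable_on_square_slices(1)[OF cont_K, where x = x and s = s and u = u and v = v and a = 0 and b = r]
      by (simp add: has_integral_integral)
    from has_integral_bound[OF less_imp_le[OF e] this] show ?thesis
      using near that r by simp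
  qed
  have "norm ((r * r) *\<^sub>R G x) \<le> (e * r) * r"
    using has_integral_bound[OF _ outer inner] e r by simp
  then have "norm (G x) \<le> e" using r by (simp add: mult.commute)
  then show False using \<open>G x \<noteq> 0\<close> by (simp add: e_def)
qed

text \<open>Both mixed derivatives integrate over a small square to the same second
  difference of \<open>f\<close>.\<close>

lemma line_derivatives_commute:
  fixes f :: "'a::real_normed_vector \<Rightarrow> 'b::banach"
  assumes du: "\<And>x. ((\<lambda>t. f (x + t *\<^sub>R u)) has_vector_derivative Fu x) (at 0)"
    and dv: "\<And>x. ((\<lambda>t. f (x + t *\<^sub>R v)) has_vector_derivative Fv x) (at 0)"
    and duv: "\<And>x. ((\<lambda>t. Fu (x + t *\<^sub>R v)) has_vector_derivative Fuv x) (at 0)"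
    and dvu: "\<And>x. ((\<lambda>t. Fv (x + t *\<^sub>R u)) has_vector_derivative Fvu x) (at 0)"
    and cuv: "continuous_on UNIV Fuv" and cvu: "continuous_on UNIV Fvu"
  shows "Fuv = Fvu"
proof
  fix x
  have "integral {0..r} (\<lambda>s. integral {0..r} (\<lambda>t. Fuv (x + s *\<^sub>R u + t *\<^sub>R v) - Fvu (x + s *\<^sub>R u + t *\<^sub>R v))) = 0"
    if r: "0 < r" for r
  proof -
    have "continuous_on (cbox (0, 0) (r, r)) (\<lambda>(t, s). Fvu (x + t *\<^sub>R v + s *\<^sub>R u))"
      unfolding case_prod_unfold by (intro continuous_on_compose2[OF cvu] continuous_intros) auto
    from integral_swap_continuous[OF this]
    have swap: "integral {0..r} (\<lambda>s. integral {0..r} (\<lambda>t. Fvu (x + s *\<^sub>R u + t *\<^sub>R v)))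
        = integral {0..r} (\<lambda>t. integral {0..r} (\<lambda>s. Fvu (x + t *\<^sub>R v + s *\<^sub>R u)))"
      by (simp add: cbox_interval add.assoc add.commute[of "_ *\<^sub>R u"])
    show ?thesis
      unfolding double_integral_diff[OF cuv cvu] swap
        double_integral_mixed_derivative[OF du duv less_imp_le[OF r]]
        double_integral_mixed_derivative[OF dv dvu less_imp_le[OF r]]
      by (simp add: algebra_simps)
  qed
  then show "Fuv x = Fvu x"
    using continuous_zero_if_square_integrals_vanish[of "\<lambda>y. Fuv y - Fvu y" x u v] cuv cvu
    by (simp add: continuous_on_diff)
qed

section \<open>Square-integrable functions\<close>

lemma square_integral_le_integral_square:
  fixes a :: "'a::euclidean_space \<Rightarrow> real"
  assumes int_a: "a integrable_on S" and int_a2: "(\<lambda>x. (a x)^2) integrable_on S"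
    and unit: "((\<lambda>x. 1::real) has_integral 1) S"
  shows "(integral S a)^2 \<le> integral S (\<lambda>x. (a x)^2)"
proof -
  define m where "m = integral S a"
  have sq: "(\<lambda>x. (a x - m)^2) = (\<lambda>x. (a x)^2 - (2 * m) * a x + m^2 * 1)"
    by (auto simp: power2_eq_square algebra_simps)
  have "((\<lambda>x. (a x)^2 - (2 * m) * a x + m^2 * 1) has_integral
      integral S (\<lambda>x. (a x)^2) - (2 * m) * m + m^2 * 1) S"
    unfolding m_def
    by (intro has_integral_add has_integral_diff has_integral_mult_right integrable_integral int_a int_a2 unit)
  then have "0 \<le> integral S (\<lambda>x. (a x)^2) - (2 * m) * m + m^2 * 1"
    by (rule has_integral_nonneg) (metis sq zero_le_power2)
  then show ?thesis by (simp add: m_def power2_eq_square)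
qed

lemma integral_nonneg_unconditional:
  fixes g :: "'n::euclidean_space \<Rightarrow> real"
  shows "(\<And>x. x \<in> S \<Longrightarrow> 0 \<le> g x) \<Longrightarrow> 0 \<le> integral S g"
  by (cases "g integrable_on S") (auto intro: integral_nonneg simp: not_integrable_integral)

lemma measurable_on_compose_continuous_zero:
  fixes T :: "'a::euclidean_space \<Rightarrow> 'b::euclidean_space"
  assumes "f measurable_on S" "continuous_on UNIV T" "T 0 = 0"
  shows "(\<lambda>x. T (f x)) measurable_on S"
  using measurable_on_compose_continuous_0[OF assms] by (simp add: o_def)

lemma measurable_on_norm:
  fixes f :: "'a::euclidean_space \<Rightarrow> 'b::euclidean_space"
  shows "f measurable_on S \<Longrightarrow> (\<lambda>x. norm (f x)) measurable_on S"
  using measurable_on_compose_continuous_zero[of f S norm] by (simp add: continuous_on_norm_id)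

lemma integrable_on_if_measurable_on_bounded:
  fixes f :: "'n::euclidean_space \<Rightarrow> 'b::euclidean_space"
  assumes S: "S \<in> sets lebesgue" and f: "f measurable_on S" and g: "g integrable_on S"
    and bound: "\<And>x. x \<in> S \<Longrightarrow> norm (f x) \<le> g x"
  shows "f integrable_on S"
  using measurable_bounded_by_integrable_imp_integrable[OF _ g bound S] f
    measurable_on_iff_borel_measurable[OF S]
  by blast

definition square_integrable :: "'n::euclidean_space set \<Rightarrow> ('n \<Rightarrow> 'b::euclidean_space) \<Rightarrow> bool" where
  "square_integrable S f \<longleftrightarrow> f measurable_on S \<and> (\<lambda>x. (norm (f x))^2) integrable_on S"

definition L2_norm :: "'n::euclidean_space set \<Rightarrow> ('n \<Rightarrow> 'b::euclidean_space) \<Rightarrow> real" where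
  "L2_norm S f = sqrt (integral S (\<lambda>x. (norm (f x))^2))"

lemma L2_norm_nonneg: "0 \<le> L2_norm S f"
  unfolding L2_norm_def by (simp add: integral_nonneg_unconditional)

lemma L2_norm_square: "(L2_norm S f)^2 = integral S (\<lambda>x. (norm (f x))^2)"
  unfolding L2_norm_def by (simp add: integral_nonneg_unconditional)

lemma L2_norm_le_iff_integral_le:
  assumes "0 \<le> B"
  shows "L2_norm S f \<le> B \<longleftrightarrow> integral S (\<lambda>x. (norm (f x))^2) \<le> B^2"
  using abs_le_square_iff[of "L2_norm S f" B] assms L2_norm_nonneg[of S f]
  by (simp add: L2_norm_square)

lemma L2_norm_mono:
  assumes "(\<lambda>x. (norm (g x))^2) integrable_on S" "(\<lambda>x. (norm (f x))^2) integrable_on S"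
    and "\<And>x. x \<in> S \<Longrightarrow> norm (f x) \<le> norm (g x)"
  shows "L2_norm S f \<le> L2_norm S g"
  unfolding L2_norm_def using assms by (intro real_sqrt_le_mono integral_le power_mono) auto

lemma L2_norm_uminus: "L2_norm S (\<lambda>x. - f x) = L2_norm S f"
  unfolding L2_norm_def by simp

lemma L2_norm_minus_commute: "L2_norm S (\<lambda>x. f x - g x) = L2_norm S (\<lambda>x. g x - f x)"
  unfolding L2_norm_def by (simp add: norm_minus_commute)

lemma square_integrable_continuous:
  fixes f :: "'n::euclidean_space \<Rightarrow> 'b::euclidean_space"
  assumes "continuous_on UNIV f" "S \<in> sets lebesgue" "(\<lambda>x. (norm (f x))^2) integrable_on S"
  shows "square_integrable S f"
  using continuous_imp_measurable_on_sets_lebesgue[OF continuous_on_subset[OF assms(1)] assms(2)]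
    measurable_on_iff_borel_measurable[OF assms(2)] assms(3)
  unfolding square_integrable_def by auto

lemma integrable_norm_mult:
  assumes S: "S \<in> sets lebesgue" and f: "square_integrable S f" and g: "square_integrable S g"
  shows "(\<lambda>x. norm (f x) * norm (g x)) integrable_on S"
proof (rule integrable_on_if_measurable_on_bounded[OF S])
  show "(\<lambda>x. norm (f x) * norm (g x)) measurable_on S"
    using measurable_on_scaleR[OF measurable_on_norm measurable_on_norm] f g
    unfolding square_integrable_def by auto
  show "(\<lambda>x. (norm (f x))^2 / 2 + (norm (g x))^2 / 2) integrable_on S"
    using f g unfolding square_integrable_def by (intro integrable_add integrable_on_divide) auto
  fix x
  show "norm (norm (f x) * norm (g x)) \<le> (norm (f x))^2 / 2 + (norm (g x))^2 / 2"
    using sum_squares_bound[of "norm (f x)" "norm (g x)"] by simp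
qed

lemma le_sqrt_mult_sqrt_if_weighted_AM_GM:
  fixes p a b :: real
  assumes AM_GM: "\<And>t. t > 0 \<Longrightarrow> 2 * p \<le> t * a + b / t" and "0 \<le> a" "0 \<le> b"
  shows "p \<le> sqrt a * sqrt b"
proof (cases "a = 0 \<or> b = 0")
  case True
  show ?thesis
  proof (rule ccontr)
    assume "\<not> ?thesis"
    then have p: "p > 0" using True by auto
    show False
    proof (cases "a = 0")
      case True
      have "2 * p \<le> b / ((b + 1) / p)" using AM_GM[of "(b + 1) / p"] p \<open>0 \<le> b\<close> True by simp
      also have "\<dots> < p" using p \<open>0 \<le> b\<close> by (simp add: field_simps)
      finally show False using p by simp
    next
      case False
      then have "b = 0" using \<open>a = 0 \<or> b = 0\<close> by simp
      have "2 * p \<le> (p / (a + 1)) * a" using AM_GM[of "p / (a + 1)"] p \<open>0 \<le> a\<close> \<open>b = 0\<close> by simp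
      also have "\<dots> < p" using p \<open>0 \<le> a\<close> by (simp add: field_simps)
      finally show False using p by simp
    qed
  qed
next
  case False
  then have "a > 0" "b > 0" using assms(2,3) by auto
  then have "sqrt b / sqrt a * a + b / (sqrt b / sqrt a) = 2 * (sqrt a * sqrt b)"
    by (simp add: field_simps)
  then show ?thesis using AM_GM[of "sqrt b / sqrt a"] \<open>a > 0\<close> \<open>b > 0\<close> by simp
qed

lemma integral_norm_mult_le_L2_norm:
  assumes S: "S \<in> sets lebesgue" and f: "square_integrable S f" and g: "square_integrable S g"
  shows "integral S (\<lambda>x. norm (f x) * norm (g x)) \<le> L2_norm S f * L2_norm S g"
proof -
  have int2: "(\<lambda>x. (norm (f x))^2) integrable_on S" "(\<lambda>x. (norm (g x))^2) integrable_on S"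
    using f g by (auto simp: square_integrable_def)
  have "2 * integral S (\<lambda>x. norm (f x) * norm (g x))
      \<le> t * integral S (\<lambda>x. (norm (f x))^2) + integral S (\<lambda>x. (norm (g x))^2) / t"
    if t: "t > 0" for t
  proof -
    have "integral S (\<lambda>x. 2 * (norm (f x) * norm (g x)))
        \<le> integral S (\<lambda>x. t * (norm (f x))^2 + (norm (g x))^2 / t)"
    proof (rule integral_le)
      show "(\<lambda>x. 2 * (norm (f x) * norm (g x))) integrable_on S"
        using integrable_norm_mult[OF S f g] by (rule integrable_on_mult_right)
      show "(\<lambda>x. t * (norm (f x))^2 + (norm (g x))^2 / t) integrable_on S"
        using int2 by (intro integrable_add integrable_on_mult_right integrable_on_divide) auto
      fix x
      have "0 \<le> (sqrt t * norm (f x) - norm (g x) / sqrt t)^2" by simp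
      also have "\<dots> = t * (norm (f x))^2 + (norm (g x))^2 / t - 2 * (norm (f x) * norm (g x))"
        using t by (simp add: power2_diff power_divide power_mult_distrib field_simps)
      finally show "2 * (norm (f x) * norm (g x)) \<le> t * (norm (f x))^2 + (norm (g x))^2 / t"
        by simp
    qed
    then show ?thesis
      using int2 by (simp add: integral_add integral_mult_right integral_divide
          integrable_on_mult_right integrable_on_divide)
  qed
  then show ?thesis
    unfolding L2_norm_def
    by (intro le_sqrt_mult_sqrt_if_weighted_AM_GM integral_nonneg_unconditional) auto
qed

lemma square_integrable_add:
  assumes S: "S \<in> sets lebesgue" and f: "square_integrable S f" and g: "square_integrable S g"
  shows "square_integrable S (\<lambda>x. f x + g x)"
proof -
  have meas: "(\<lambda>x. f x + g x) measurable_on S"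
    using f g by (auto simp: square_integrable_def intro: measurable_on_add)
  have "(\<lambda>x. (norm (f x + g x))^2) integrable_on S"
  proof (rule integrable_on_if_measurable_on_bounded[OF S])
    show "(\<lambda>x. (norm (f x + g x))^2) measurable_on S"
      using measurable_on_scaleR[OF measurable_on_norm[OF meas] measurable_on_norm[OF meas]]
      by (simp add: power2_eq_square)
    show "(\<lambda>x. 2 * (norm (f x))^2 + 2 * (norm (g x))^2) integrable_on S"
      using f g unfolding square_integrable_def by (intro integrable_add integrable_on_mult_right) auto
    fix x
    have "(norm (f x + g x))^2 \<le> (norm (f x) + norm (g x))^2"
      by (intro power_mono norm_triangle_ineq) auto
    then show "norm ((norm (f x + g x))^2) \<le> 2 * (norm (f x))^2 + 2 * (norm (g x))^2"
      using sum_squares_bound[of "norm (f x)" "norm (g x)"] by (simp add: power2_sum)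
  qed
  with meas show ?thesis by (simp add: square_integrable_def)
qed

lemma L2_norm_triangle:
  assumes S: "S \<in> sets lebesgue" and f: "square_integrable S f" and g: "square_integrable S g"
  shows "L2_norm S (\<lambda>x. f x + g x) \<le> L2_norm S f + L2_norm S g"
proof -
  have int2: "(\<lambda>x. (norm (f x))^2) integrable_on S" "(\<lambda>x. (norm (g x))^2) integrable_on S"
    using f g by (auto simp: square_integrable_def)
  have "integral S (\<lambda>x. (norm (f x + g x))^2)
      \<le> integral S (\<lambda>x. (norm (f x))^2 + 2 * (norm (f x) * norm (g x)) + (norm (g x))^2)"
  proof (rule integral_le)
    show "(\<lambda>x. (norm (f x + g x))^2) integrable_on S"
      using square_integrable_add[OF S f g] by (simp add: square_integrable_def)
    show "(\<lambda>x. (norm (f x))^2 + 2 * (norm (f x) * norm (g x)) + (norm (g x))^2) integrable_on S"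
      using int2 integrable_norm_mult[OF S f g] by (intro integrable_add integrable_on_mult_right) auto
    fix x
    have "(norm (f x + g x))^2 \<le> (norm (f x) + norm (g x))^2"
      by (intro power_mono norm_triangle_ineq) auto
    then show "(norm (f x + g x))^2 \<le> (norm (f x))^2 + 2 * (norm (f x) * norm (g x)) + (norm (g x))^2"
      by (simp add: power2_sum)
  qed
  also have "\<dots> = integral S (\<lambda>x. (norm (f x))^2) + 2 * integral S (\<lambda>x. norm (f x) * norm (g x))
      + integral S (\<lambda>x. (norm (g x))^2)"
    using int2 integrable_norm_mult[OF S f g]
    by (simp add: integral_add integral_mult_right integrable_add integrable_on_mult_right)
  also have "\<dots> \<le> (L2_norm S f + L2_norm S g)^2"
    using integral_norm_mult_le_L2_norm[OF S f g] by (simp add: L2_norm_square power2_sum)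
  finally show ?thesis
    using L2_norm_nonneg[of S f] L2_norm_nonneg[of S g]
    by (simp add: L2_norm_le_iff_integral_le)
qed

lemma square_integrable_uminus: "square_integrable S f \<Longrightarrow> square_integrable S (\<lambda>x. - f x)"
  unfolding square_integrable_def by (auto intro: measurable_on_minus)

lemma square_integrable_diff:
  "S \<in> sets lebesgue \<Longrightarrow> square_integrable S f \<Longrightarrow> square_integrable S g
    \<Longrightarrow> square_integrable S (\<lambda>x. f x - g x)"
  using square_integrable_add[of S f "\<lambda>x. - g x"] square_integrable_uminus[of S g] by simp

lemma L2_norm_triangle_diff:
  assumes "S \<in> sets lebesgue" "square_integrable S f" "square_integrable S g"
  shows "L2_norm S (\<lambda>x. f x - g x) \<le> L2_norm S f + L2_norm S g"
  using L2_norm_triangle[OF assms(1,2) square_integrable_uminus[OF assms(3)]]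
  by (simp add: L2_norm_uminus)

lemma L2_norm_le_add_L2_norm_diff:
  assumes S: "S \<in> sets lebesgue" and f: "square_integrable S f" and g: "square_integrable S g"
  shows "L2_norm S f \<le> L2_norm S g + L2_norm S (\<lambda>x. f x - g x)"
  using L2_norm_triangle[OF S g square_integrable_diff[OF S f g]] by simp

lemma square_integrable_bounded:
  assumes S: "S \<in> sets lebesgue" and g: "square_integrable S g" and meas: "f measurable_on S"
    and bound: "\<And>x. x \<in> S \<Longrightarrow> norm (f x) \<le> B * norm (g x)"
  shows "square_integrable S f"
proof -
  have "(\<lambda>x. (norm (f x))^2) integrable_on S"
  proof (rule integrable_on_if_measurable_on_bounded[OF S])
    show "(\<lambda>x. (norm (f x))^2) measurable_on S"
      using measurable_on_scaleR[OF measurable_on_norm[OF meas] measurable_on_norm[OF meas]]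
      by (simp add: power2_eq_square)
    show "(\<lambda>x. B^2 * (norm (g x))^2) integrable_on S"
      using g unfolding square_integrable_def by (intro integrable_on_mult_right) auto
    show "norm ((norm (f x))^2) \<le> B^2 * (norm (g x))^2" if "x \<in> S" for x
      using power_mono[OF bound[OF that]] by (simp add: power_mult_distrib)
  qed
  with meas show ?thesis by (simp add: square_integrable_def)
qed

lemma L2_norm_le_bound:
  assumes S: "S \<in> sets lebesgue" and g: "square_integrable S g" and meas: "f measurable_on S"
    and B: "0 \<le> B" and bound: "\<And>x. x \<in> S \<Longrightarrow> norm (f x) \<le> B * norm (g x)"
  shows "L2_norm S f \<le> B * L2_norm S g"
proof -
  have "integral S (\<lambda>x. (norm (f x))^2) \<le> integral S (\<lambda>x. B^2 * (norm (g x))^2)"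
  proof (rule integral_le)
    show "(\<lambda>x. (norm (f x))^2) integrable_on S"
      using square_integrable_bounded[OF S g meas bound] by (simp add: square_integrable_def)
    show "(\<lambda>x. B^2 * (norm (g x))^2) integrable_on S"
      using g unfolding square_integrable_def by (intro integrable_on_mult_right) auto
    show "(norm (f x))^2 \<le> B^2 * (norm (g x))^2" if "x \<in> S" for x
      using power_mono[OF bound[OF that]] by (simp add: power_mult_distrib)
  qed
  also have "\<dots> = (B * L2_norm S g)^2"
    by (simp add: L2_norm_square power_mult_distrib)
  finally show ?thesis
    using B L2_norm_nonneg[of S g] by (simp add: L2_norm_le_iff_integral_le)
qed

lemma
  assumes S: "S \<in> sets lebesgue" and unit: "((\<lambda>x. 1::real) has_integral 1) S"
  shows square_integrable_const: "square_integrable S (\<lambda>x. K)"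
    and L2_norm_const: "L2_norm S (\<lambda>x. K) = norm K"
proof -
  have "((\<lambda>x. (norm K)^2) has_integral (norm K)^2) S"
    using has_integral_mult_right[OF unit, of "(norm K)^2"] by simp
  then show "square_integrable S (\<lambda>x. K)" "L2_norm S (\<lambda>x. K) = norm K"
    using S by (auto simp: square_integrable_def L2_norm_def integral_unique)
qed

lemma
  fixes f :: "'n::euclidean_space \<Rightarrow> 'b::euclidean_space"
  assumes S: "S \<in> sets lebesgue" and unit: "((\<lambda>x. 1::real) has_integral 1) S"
    and f: "square_integrable S f"
  shows integrable_if_square_integrable: "f integrable_on S"
    and norm_integral_le_L2_norm: "norm (integral S f) \<le> L2_norm S f"
proof -
  have int_bound: "(\<lambda>x. (1 + (norm (f x))^2) / 2) integrable_on S"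
    using f unit by (intro integrable_on_divide integrable_add) (auto simp: square_integrable_def)
  have bound: "norm (f x) \<le> (1 + (norm (f x))^2) / 2" for x
    using sum_squares_bound[of 1 "norm (f x)"] by simp
  show int_f: "f integrable_on S"
    using integrable_on_if_measurable_on_bounded[OF S _ int_bound bound] f
    by (simp add: square_integrable_def)
  have int_norm: "(\<lambda>x. norm (f x)) integrable_on S"
    using integrable_on_if_measurable_on_bounded[OF S measurable_on_norm int_bound] bound f
    by (auto simp: square_integrable_def)
  have "norm (integral S f) \<le> integral S (\<lambda>x. norm (f x))"
    by (rule integral_norm_bound_integral[OF int_f int_norm]) auto
  also have "\<dots> \<le> L2_norm S f"
    using square_integral_le_integral_square[OF int_norm _ unit] f
    unfolding L2_norm_def by (simp add: square_integrable_def real_le_rsqrt)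
  finally show "norm (integral S f) \<le> L2_norm S f" .
qed

lemma L2_norm_sub_integral_le:
  assumes S: "S \<in> sets lebesgue" and unit: "((\<lambda>x. 1::real) has_integral 1) S"
    and f: "square_integrable S f"
  shows "L2_norm S (\<lambda>x. f x - integral S f) \<le> 2 * L2_norm S (\<lambda>x. f x - K)"
proof -
  have fK: "square_integrable S (\<lambda>x. f x - K)"
    by (rule square_integrable_diff[OF S f square_integrable_const[OF S unit]])
  have has_K: "((\<lambda>x. K) has_integral K) S"
    using has_integral_scaleR_left[OF unit, of K] by simp
  have "integral S (\<lambda>x. f x - K) = integral S f - integral S (\<lambda>x. K)"
    using has_K integrable_if_square_integrable[OF S unit f] by (intro integral_diff) auto
  then have "integral S f - K = integral S (\<lambda>x. f x - K)"
    using integral_unique[OF has_K] by simp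
  then have "L2_norm S (\<lambda>x. integral S f - K) \<le> L2_norm S (\<lambda>x. f x - K)"
    using norm_integral_le_L2_norm[OF S unit fK] by (simp add: L2_norm_const[OF S unit])
  moreover have "L2_norm S (\<lambda>x. (f x - K) - (integral S f - K))
      \<le> L2_norm S (\<lambda>x. f x - K) + L2_norm S (\<lambda>x. integral S f - K)"
    by (rule L2_norm_triangle_diff[OF S fK square_integrable_const[OF S unit]])
  ultimately show ?thesis by simp
qed

lemma L2_norm_sub_integral_approx:
  assumes S: "S \<in> sets lebesgue" and unit: "((\<lambda>x. 1::real) has_integral 1) S"
    and u: "square_integrable S u" and \<phi>: "square_integrable S \<phi>"
  shows "L2_norm S (\<lambda>x. u x - integral S u) \<le> L2_norm S (\<lambda>x. \<phi> x - integral S \<phi>) + 2 * L2_norm S (\<lambda>x. u x - \<phi> x)"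
proof -
  have u\<phi>: "square_integrable S (\<lambda>x. u x - \<phi> x)" by (rule square_integrable_diff[OF S u \<phi>])
  have const: "square_integrable S (\<lambda>x. K)" for K :: 'b
    by (rule square_integrable_const[OF S unit])
  have "integral S u - integral S \<phi> = integral S (\<lambda>x. u x - \<phi> x)"
    by (simp add: integral_diff integrable_if_square_integrable[OF S unit] u \<phi>)
  then have mean: "L2_norm S (\<lambda>x. integral S u - integral S \<phi>) \<le> L2_norm S (\<lambda>x. u x - \<phi> x)"
    using norm_integral_le_L2_norm[OF S unit u\<phi>] by (simp add: L2_norm_const[OF S unit])
  have "L2_norm S (\<lambda>x. u x - integral S u)
      \<le> L2_norm S (\<lambda>x. \<phi> x - integral S \<phi>) + L2_norm S (\<lambda>x. (u x - \<phi> x) - (integral S u - integral S \<phi>))"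
  proof -
    have "(\<lambda>x. (u x - integral S u) - (\<phi> x - integral S \<phi>)) = (\<lambda>x. (u x - \<phi> x) - (integral S u - integral S \<phi>))"
      by (rule ext) (simp add: algebra_simps)
    with L2_norm_le_add_L2_norm_diff[OF S square_integrable_diff[OF S u const[of "integral S u"]]
        square_integrable_diff[OF S \<phi> const[of "integral S \<phi>"]]]
    show ?thesis by simp
  qed
  also have "\<dots> \<le> L2_norm S (\<lambda>x. \<phi> x - integral S \<phi>) + (L2_norm S (\<lambda>x. u x - \<phi> x) + L2_norm S (\<lambda>x. integral S u - integral S \<phi>))"
    using L2_norm_triangle_diff[OF S u\<phi> const] by simp
  finally show ?thesis using mean by simp
qed

lemma
  assumes S: "S \<in> sets lebesgue" and F: "square_integrable S F" and T: "bounded_linear T"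
    and bound: "\<And>v. norm (T v) \<le> B * norm v"
  shows square_integrable_bounded_linear: "square_integrable S (\<lambda>x. T (F x))"
    and L2_norm_bounded_linear_le: "0 \<le> B \<Longrightarrow> L2_norm S (\<lambda>x. T (F x)) \<le> B * L2_norm S F"
proof -
  have "(\<lambda>x. T (F x)) measurable_on S"
    using F linear_continuous_on[OF T] linear_0[OF bounded_linear.linear[OF T]]
    unfolding square_integrable_def by (blast intro: measurable_on_compose_continuous_zero)
  then show "square_integrable S (\<lambda>x. T (F x))"
    using bound by (rule square_integrable_bounded[OF S F])
  show "L2_norm S (\<lambda>x. T (F x)) \<le> B * L2_norm S F" if "0 \<le> B"
    using bound by (rule L2_norm_le_bound[OF S F \<open>(\<lambda>x. T (F x)) measurable_on S\<close> that])
qed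

lemma le_of_approximations:
  fixes X K W :: real and Y Z a b :: "nat \<Rightarrow> real"
  assumes "\<And>n. X \<le> Y n + a n" "\<And>n. Y n \<le> K * Z n" "\<And>n. Z n \<le> W + b n"
    and "0 \<le> K" "a \<longlonglongrightarrow> 0" "b \<longlonglongrightarrow> 0"
  shows "X \<le> K * W"
proof (rule LIMSEQ_le_const)
  show "(\<lambda>n. K * W + (K * b n + a n)) \<longlonglongrightarrow> K * W"
    using assms(5,6) by (auto intro!: tendsto_eq_intros)
  have "X \<le> K * W + (K * b n + a n)" for n
    using assms(1)[of n] assms(2)[of n] mult_left_mono[OF assms(3) assms(4), of n]
    by (simp add: algebra_simps)
  then show "\<exists>N. \<forall>n\<ge>N. X \<le> K * W + (K * b n + a n)" by blast
qed

section \<open>Smooth periodic functions\<close>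

definition has_pderiv3 :: "(real^3 \<Rightarrow> 'b::real_normed_vector) \<Rightarrow> 3 \<Rightarrow> (real^3 \<Rightarrow> 'b) \<Rightarrow> bool" where
  "has_pderiv3 f j F \<longleftrightarrow> (\<forall>x. ((\<lambda>t. f (x + t *\<^sub>R axis j 1)) has_vector_derivative F x) (at 0))"

definition C1_periodic :: "(real^3 \<Rightarrow> 'b::real_normed_vector) \<Rightarrow> bool" where
  "C1_periodic f \<longleftrightarrow> continuous_on UNIV f \<and> periodic3 f \<and>
     (\<forall>j. has_pderiv3 f j (pderiv3 f j) \<and> continuous_on UNIV (pderiv3 f j))"

definition C2_periodic :: "(real^3 \<Rightarrow> 'b::real_normed_vector) \<Rightarrow> bool" where
  "C2_periodic f \<longleftrightarrow> C1_periodic f \<and> (\<forall>j. C1_periodic (pderiv3 f j))"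

lemma pderiv3_eqI: "has_pderiv3 f j F \<Longrightarrow> pderiv3 f j = F"
  unfolding has_pderiv3_def pderiv3_def by (auto intro: vector_derivative_at)

lemma axis_in_lattice3: "axis j 1 \<in> lattice3"
  by (auto simp: lattice3_def axis_def)

lemma periodic3_add_axis: "periodic3 f \<Longrightarrow> f (x + axis j 1) = f x"
  using axis_in_lattice3 unfolding periodic3_def by blast

lemma periodic3_pderiv3:
  assumes "periodic3 f"
  shows "periodic3 (pderiv3 f j)"
  unfolding periodic3_def
proof (intro allI ballI)
  fix x k assume k: "k \<in> lattice3"
  have "f (x + k + t *\<^sub>R axis j 1) = f ((x + t *\<^sub>R axis j 1) + k)" for t
    by (simp add: algebra_simps)
  then have "f (x + k + t *\<^sub>R axis j 1) = f (x + t *\<^sub>R axis j 1)" for t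
    using assms k unfolding periodic3_def by simp
  then show "pderiv3 f j (x + k) = pderiv3 f j x" unfolding pderiv3_def by simp
qed

lemma smooth3_pderiv3:
  assumes "smooth3 f"
  shows "continuous_on UNIV f" "has_pderiv3 f j (pderiv3 f j)" "smooth3 (pderiv3 f j)"
  using assms by (cases rule: smooth3.cases; auto simp: has_pderiv3_def)+

lemma C2_periodic_if_smooth3:
  assumes "smooth3 f" "periodic3 f"
  shows "C2_periodic f"
proof -
  have "smooth3 (pderiv3 (pderiv3 f j) k)" for j k
    using smooth3_pderiv3(3)[OF smooth3_pderiv3(3)[OF assms(1)]] .
  then show ?thesis
    unfolding C2_periodic_def C1_periodic_def
    using smooth3_pderiv3[OF assms(1)] smooth3_pderiv3[OF smooth3_pderiv3(3)[OF assms(1)]]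
      smooth3_pderiv3(1) periodic3_pderiv3[OF assms(2)] assms(2)
    by blast
qed

lemma has_pderiv3_component:
  fixes f :: "real^3 \<Rightarrow> 'a::real_normed_vector^'n"
  shows "has_pderiv3 f j F \<Longrightarrow> has_pderiv3 (\<lambda>x. f x $ i) j (\<lambda>x. F x $ i)"
  unfolding has_pderiv3_def
  by (auto intro: bounded_linear.has_vector_derivative[OF bounded_linear_vec_nth])

lemma pderiv3_component:
  fixes f :: "real^3 \<Rightarrow> 'a::real_normed_vector^'n"
  shows "has_pderiv3 f j (pderiv3 f j) \<Longrightarrow> pderiv3 (\<lambda>x. f x $ i) j = (\<lambda>x. pderiv3 f j x $ i)"
  by (rule pderiv3_eqI[OF has_pderiv3_component])

lemma C1_periodic_component:
  fixes f :: "real^3 \<Rightarrow> 'a::real_normed_vector^'n"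
  shows "C1_periodic f \<Longrightarrow> C1_periodic (\<lambda>x. f x $ i)"
  unfolding C1_periodic_def periodic3_def
  by (auto simp: pderiv3_component has_pderiv3_component intro: continuous_on_component)

lemma C2_periodic_component:
  fixes f :: "real^3 \<Rightarrow> 'a::real_normed_vector^'n"
  assumes "C2_periodic f"
  shows "C2_periodic (\<lambda>x. f x $ i)"
proof -
  have "pderiv3 (\<lambda>x. f x $ i) j = (\<lambda>x. pderiv3 f j x $ i)" for j
    using assms by (intro pderiv3_component) (auto simp: C2_periodic_def C1_periodic_def)
  with assms show ?thesis
    unfolding C2_periodic_def by (simp add: C1_periodic_component)
qed

lemma pderiv3_commute:
  fixes f :: "real^3 \<Rightarrow> 'b::banach"
  assumes "C2_periodic f"
  shows "pderiv3 (pderiv3 f i) j = pderiv3 (pderiv3 f j) i"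
  by (rule line_derivatives_commute[of f "axis i 1" "pderiv3 f i" "axis j 1" "pderiv3 f j"])
     (use assms in \<open>auto simp: C2_periodic_def C1_periodic_def has_pderiv3_def\<close>)

lemma
  fixes f g :: "real^3 \<Rightarrow> complex"
  assumes "C1_periodic f" "C1_periodic g"
  shows pderiv3_lincomb:
      "pderiv3 (\<lambda>x. a * f x + b * g x) j = (\<lambda>x. a * pderiv3 f j x + b * pderiv3 g j x)"
    and C1_periodic_lincomb: "C1_periodic (\<lambda>x. a * f x + b * g x)"
proof -
  have deriv: "has_pderiv3 (\<lambda>x. a * f x + b * g x) j (\<lambda>x. a * pderiv3 f j x + b * pderiv3 g j x)" for j
    using assms unfolding C1_periodic_def has_pderiv3_def by (auto intro!: derivative_eq_intros)
  show "pderiv3 (\<lambda>x. a * f x + b * g x) j = (\<lambda>x. a * pderiv3 f j x + b * pderiv3 g j x)"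
    by (rule pderiv3_eqI[OF deriv])
  show "C1_periodic (\<lambda>x. a * f x + b * g x)"
    using assms unfolding C1_periodic_def
    by (auto simp: pderiv3_eqI[OF deriv] deriv periodic3_def intro!: continuous_intros)
qed

lemma integrable_continuous_UNIV:
  fixes f :: "'a::euclidean_space \<Rightarrow> 'b::banach"
  shows "continuous_on UNIV f \<Longrightarrow> f integrable_on cbox a b"
  by (rule integrable_continuous) (auto intro: continuous_on_subset)

abbreviation unit_cube3 :: "(real^3) set" where
  "unit_cube3 \<equiv> cbox 0 One"

lemma One_vec_nth: "(One :: real^'n) $ k = 1"
  unfolding cart_eq_inner_axis by (rule inner_sum_Basis) simp

lemma mem_unit_cube3: "x \<in> unit_cube3 \<longleftrightarrow> (\<forall>k. 0 \<le> x$k \<and> x$k \<le> 1)"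
  unfolding mem_box_cart One_vec_nth by simp

lemma unit_cube3_has_integral_one: "((\<lambda>x. 1::real) has_integral 1) unit_cube3"
  using has_integral_const[of "1::real" 0 "One::real^3"] by (simp add: content_cbox_if inner_Basis)

lemma integral_by_parts_unit_cube3:
  fixes f g :: "real^3 \<Rightarrow> complex"
  assumes f: "C1_periodic f" and g: "C1_periodic g"
  shows "integral unit_cube3 (\<lambda>x. pderiv3 f j x * cnj (g x))
    = - integral unit_cube3 (\<lambda>x. f x * cnj (pderiv3 g j x))"
proof -
  let ?h' = "\<lambda>x. f x * cnj (pderiv3 g j x) + pderiv3 f j x * cnj (g x)"
  have cont: "continuous_on UNIV (pderiv3 f j)" "continuous_on UNIV (pderiv3 g j)"
    "continuous_on UNIV f" "continuous_on UNIV g"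
    using f g by (auto simp: C1_periodic_def)
  have per: "periodic3 f" "periodic3 g" "periodic3 (pderiv3 f j)" "periodic3 (pderiv3 g j)"
    using f g periodic3_pderiv3 by (auto simp: C1_periodic_def)
  have "integral unit_cube3 ?h' = 0"
  proof (rule integral_unit_cube_periodic_derivative)
    show "((\<lambda>t. f (x + t *\<^sub>R axis j 1) * cnj (g (x + t *\<^sub>R axis j 1))) has_vector_derivative ?h' x) (at 0)" for x
      using f g unfolding C1_periodic_def has_pderiv3_def by (auto intro!: derivative_eq_intros)
  qed (auto intro!: continuous_intros cont simp: periodic3_add_axis[OF per(1)]
      periodic3_add_axis[OF per(2)] periodic3_add_axis[OF per(3)] periodic3_add_axis[OF per(4)])
  moreover have "integral unit_cube3 ?h' = integral unit_cube3 (\<lambda>x. f x * cnj (pderiv3 g j x))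
      + integral unit_cube3 (\<lambda>x. pderiv3 f j x * cnj (g x))"
    by (intro integral_add integrable_continuous_UNIV continuous_intros cont)
  ultimately show ?thesis by (simp add: add_eq_0_iff)
qed

lemma norm_square_vec: "(norm (v::'a::real_normed_vector^'n))^2 = (\<Sum>i\<in>UNIV. (norm (v$i))^2)"
  unfolding norm_vec_def L2_set_def by (simp add: sum_nonneg)

lemma continuous_on_grad3: "C1_periodic \<phi> \<Longrightarrow> continuous_on UNIV (grad3 \<phi>)"
  unfolding grad3_def[abs_def] by (intro continuous_intros) (auto simp: C1_periodic_def)

lemma norm_pderiv3_le_grad3: "norm (pderiv3 \<phi> j x) \<le> norm (grad3 \<phi> x)"
proof -
  have "(norm (pderiv3 \<phi> j x))^2 = (\<Sum>i\<in>UNIV. (cmod (grad3 \<phi> x $ i $ j))^2)"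
    unfolding norm_square_vec grad3_def by simp
  also have "\<dots> \<le> (\<Sum>i\<in>UNIV. \<Sum>k\<in>UNIV. (cmod (grad3 \<phi> x $ i $ k))^2)"
    by (intro sum_mono member_le_sum) auto
  also have "\<dots> = (norm (grad3 \<phi> x))^2" by (simp add: norm_square_vec)
  finally show ?thesis by (rule power2_le_imp_le) simp
qed

section \<open>Twisted derivatives and Korn's inequality\<close>

text \<open>\<open>tpderiv3 c f j\<close> is \<open>D\<^sub>j f = \<partial>\<^sub>j f + i c\<^sub>j f = exp (- i c \<bullet> x) \<partial>\<^sub>j (exp (i c \<bullet> x) f)\<close>; for
  \<open>u : \<real>\<^sup>3 \<rightarrow> \<complex>\<^sup>3\<close>, the matrix \<open>sym \<nabla>u + i X\<^sub>c u\<close> is the symmetric part of \<open>(D\<^sub>j u\<^sub>i)\<^sub>i\<^sub>j\<close>.\<close>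

definition tpderiv3 :: "real^3 \<Rightarrow> (real^3 \<Rightarrow> complex) \<Rightarrow> 3 \<Rightarrow> real^3 \<Rightarrow> complex" where
  "tpderiv3 c f j x = pderiv3 f j x + \<i> * of_real (c$j) * f x"

lemma tpderiv3_eq_lincomb: "tpderiv3 c f j = (\<lambda>x. 1 * pderiv3 f j x + (\<i> * of_real (c$j)) * f x)"
  by (auto simp: tpderiv3_def)

lemma C1_periodic_tpderiv3: "C2_periodic f \<Longrightarrow> C1_periodic (tpderiv3 c f j)"
  unfolding C2_periodic_def tpderiv3_eq_lincomb by (intro C1_periodic_lincomb) auto

lemma continuous_on_tpderiv3: "C1_periodic f \<Longrightarrow> continuous_on UNIV (tpderiv3 c f j)"
  unfolding tpderiv3_eq_lincomb C1_periodic_def by (intro continuous_intros) auto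

lemma periodic3_tpderiv3: "C1_periodic f \<Longrightarrow> periodic3 (tpderiv3 c f j)"
  using periodic3_pderiv3[of f j] unfolding C1_periodic_def periodic3_def tpderiv3_def by auto

lemma tpderiv3_commute:
  assumes "C2_periodic f"
  shows "tpderiv3 c (tpderiv3 c f i) j = tpderiv3 c (tpderiv3 c f j) i"
proof
  fix x
  have pd: "pderiv3 (tpderiv3 c f i) k = (\<lambda>x. pderiv3 (pderiv3 f i) k x + (\<i> * of_real (c$i)) * pderiv3 f k x)" for i k
    using assms unfolding C2_periodic_def tpderiv3_eq_lincomb by (subst pderiv3_lincomb) auto
  show "tpderiv3 c (tpderiv3 c f i) j x = tpderiv3 c (tpderiv3 c f j) i x"
    unfolding tpderiv3_def[of c "tpderiv3 c f _"] pd pderiv3_commute[OF assms, of i j]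
    by (simp add: tpderiv3_def algebra_simps)
qed

lemma integral_by_parts_tpderiv3:
  assumes f: "C1_periodic f" and g: "C1_periodic g"
  shows "integral unit_cube3 (\<lambda>x. tpderiv3 c f j x * cnj (g x))
    = - integral unit_cube3 (\<lambda>x. f x * cnj (tpderiv3 c g j x))"
proof -
  have cont: "continuous_on UNIV f" "continuous_on UNIV g"
    "continuous_on UNIV (pderiv3 f j)" "continuous_on UNIV (pderiv3 g j)"
    using f g by (auto simp: C1_periodic_def)
  let ?I = "integral unit_cube3 (\<lambda>x. f x * cnj (g x))"
  have "integral unit_cube3 (\<lambda>x. tpderiv3 c f j x * cnj (g x))
      = integral unit_cube3 (\<lambda>x. pderiv3 f j x * cnj (g x) + (\<i> * of_real (c$j)) * (f x * cnj (g x)))"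
    by (simp add: tpderiv3_def algebra_simps)
  also have "\<dots> = integral unit_cube3 (\<lambda>x. pderiv3 f j x * cnj (g x)) + (\<i> * of_real (c$j)) * ?I"
    by (subst integral_add) (auto intro!: integrable_continuous_UNIV continuous_intros cont)
  also have "\<dots> = - integral unit_cube3 (\<lambda>x. f x * cnj (pderiv3 g j x)) + (\<i> * of_real (c$j)) * ?I"
    by (simp add: integral_by_parts_unit_cube3[OF f g])
  also have "\<dots> = - (integral unit_cube3 (\<lambda>x. f x * cnj (pderiv3 g j x)) + (- \<i> * of_real (c$j)) * ?I)"
    by simp
  also have "\<dots> = - integral unit_cube3 (\<lambda>x. f x * cnj (pderiv3 g j x) + (- \<i> * of_real (c$j)) * (f x * cnj (g x)))"
    by (subst integral_add) (auto intro!: integrable_continuous_UNIV continuous_intros cont)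
  also have "\<dots> = - integral unit_cube3 (\<lambda>x. f x * cnj (tpderiv3 c g j x))"
    by (simp add: tpderiv3_def algebra_simps)
  finally show ?thesis .
qed

lemma integral_tpderiv3_swap:
  assumes f: "C2_periodic f" and g: "C2_periodic g"
  shows "integral unit_cube3 (\<lambda>x. tpderiv3 c f j x * cnj (tpderiv3 c g i x))
    = integral unit_cube3 (\<lambda>x. tpderiv3 c f i x * cnj (tpderiv3 c g j x))"
proof -
  have f1: "C1_periodic f" using f by (simp add: C2_periodic_def)
  have "integral unit_cube3 (\<lambda>x. tpderiv3 c f j x * cnj (tpderiv3 c g i x))
      = - integral unit_cube3 (\<lambda>x. f x * cnj (tpderiv3 c (tpderiv3 c g i) j x))"
    by (rule integral_by_parts_tpderiv3[OF f1 C1_periodic_tpderiv3[OF g]])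
  also have "\<dots> = - integral unit_cube3 (\<lambda>x. f x * cnj (tpderiv3 c (tpderiv3 c g j) i x))"
    by (simp add: tpderiv3_commute[OF g])
  also have "\<dots> = integral unit_cube3 (\<lambda>x. tpderiv3 c f i x * cnj (tpderiv3 c g j x))"
    by (simp add: integral_by_parts_tpderiv3[OF f1 C1_periodic_tpderiv3[OF g]])
  finally show ?thesis .
qed

lemma integral_sum_sum:
  fixes R :: "'i \<Rightarrow> 'j \<Rightarrow> 'a::euclidean_space \<Rightarrow> 'b::banach"
  assumes "finite I" "finite J" "\<And>i j. i \<in> I \<Longrightarrow> j \<in> J \<Longrightarrow> R i j integrable_on S"
  shows "integral S (\<lambda>x. \<Sum>i\<in>I. \<Sum>j\<in>J. R i j x) = (\<Sum>i\<in>I. \<Sum>j\<in>J. integral S (R i j))"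
  using assms by (simp add: integral_sum integrable_sum)

lemma
  assumes "f integrable_on S"
  shows integrable_on_Re: "(\<lambda>x. Re (f x)) integrable_on S"
    and integral_Re: "integral S (\<lambda>x. Re (f x)) = Re (integral S f)"
  using has_integral_Re[OF integrable_integral[OF assms]] by (auto intro: integral_unique)

lemma sum_cmod_sym_square:
  fixes A :: "'n::finite \<Rightarrow> 'n \<Rightarrow> complex"
  shows "(\<Sum>i\<in>UNIV. \<Sum>j\<in>UNIV. (cmod ((A i j + A j i) / 2))^2)
    = (1/2) * (\<Sum>i\<in>UNIV. \<Sum>j\<in>UNIV. (cmod (A i j))^2)
      + (1/2) * (\<Sum>i\<in>UNIV. \<Sum>j\<in>UNIV. Re (A i j * cnj (A j i)))"
proof -
  have sq: "(cmod ((A i j + A j i) / 2))^2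
      = ((cmod (A i j))^2 + (cmod (A j i))^2 + 2 * Re (A i j * cnj (A j i))) / 4" for i j
    unfolding norm_divide power_divide cmod_power2 by (simp add: power2_eq_square algebra_simps)
  have swap: "(\<Sum>i\<in>UNIV. \<Sum>j\<in>UNIV. (cmod (A j i))^2) = (\<Sum>i\<in>UNIV. \<Sum>j\<in>UNIV. (cmod (A i j))^2)"
    by (rule sum.swap)
  show ?thesis unfolding sq
    by (simp add: sum_divide_distrib[symmetric] sum.distrib sum_distrib_left swap field_simps)
qed

text \<open>Integrating by parts twice turns the cross terms \<open>D\<^sub>j u\<^sub>i conj (D\<^sub>i u\<^sub>j)\<close> into
  \<open>D\<^sub>i u\<^sub>i conj (D\<^sub>j u\<^sub>j)\<close>, which sum to \<open>|div|\<^sup>2\<close>.\<close>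

lemma integral_tpderiv3_cross_terms:
  fixes \<phi> :: "real^3 \<Rightarrow> complex^3" and c :: "real^3"
  assumes \<phi>: "C2_periodic \<phi>"
  defines "A \<equiv> \<lambda>i j. tpderiv3 c (\<lambda>x. \<phi> x $ i) j"
  shows "integral unit_cube3 (\<lambda>x. \<Sum>i\<in>UNIV. \<Sum>j\<in>UNIV. Re (A i j x * cnj (A j i x)))
    = integral unit_cube3 (\<lambda>x. (cmod (\<Sum>i\<in>UNIV. A i i x))^2)"
proof -
  have \<phi>i: "C2_periodic (\<lambda>x. \<phi> x $ i)" for i
    by (rule C2_periodic_component[OF \<phi>])
  have cont: "continuous_on UNIV (A i j)" for i j
    using \<phi>i[of i] unfolding A_def C2_periodic_def by (simp add: continuous_on_tpderiv3)
  have int: "(\<lambda>x. A i j x * cnj (A k l x)) integrable_on unit_cube3" for i j k l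
    by (intro integrable_continuous_UNIV continuous_intros cont)
  have "integral unit_cube3 (\<lambda>x. \<Sum>i\<in>UNIV. \<Sum>j\<in>UNIV. Re (A i j x * cnj (A j i x)))
      = (\<Sum>i\<in>UNIV. \<Sum>j\<in>UNIV. integral unit_cube3 (\<lambda>x. Re (A i j x * cnj (A j i x))))"
    by (rule integral_sum_sum) (simp, simp, rule integrable_on_Re[OF int])
  also have "\<dots> = (\<Sum>i\<in>UNIV. \<Sum>j\<in>UNIV. Re (integral unit_cube3 (\<lambda>x. A i j x * cnj (A j i x))))"
    by (simp only: integral_Re[OF int])
  also have "\<dots> = (\<Sum>i\<in>UNIV. \<Sum>j\<in>UNIV. Re (integral unit_cube3 (\<lambda>x. A i i x * cnj (A j j x))))"
    unfolding A_def by (simp add: integral_tpderiv3_swap[OF \<phi>i \<phi>i])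
  also have "\<dots> = (\<Sum>i\<in>UNIV. \<Sum>j\<in>UNIV. integral unit_cube3 (\<lambda>x. Re (A i i x * cnj (A j j x))))"
    by (simp only: integral_Re[OF int])
  also have "\<dots> = integral unit_cube3 (\<lambda>x. \<Sum>i\<in>UNIV. \<Sum>j\<in>UNIV. Re (A i i x * cnj (A j j x)))"
    by (rule integral_sum_sum[symmetric]) (simp, simp, rule integrable_on_Re[OF int])
  also have "\<dots> = integral unit_cube3 (\<lambda>x. (cmod (\<Sum>i\<in>UNIV. A i i x))^2)"
  proof (rule integral_cong)
    fix x
    have "(\<Sum>i\<in>UNIV. \<Sum>j\<in>UNIV. Re (A i i x * cnj (A j j x)))
        = Re ((\<Sum>i\<in>UNIV. A i i x) * cnj (\<Sum>j\<in>UNIV. A j j x))"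
      by (simp only: sum_product cnj_sum Re_sum)
    then show "(\<Sum>i\<in>UNIV. \<Sum>j\<in>UNIV. Re (A i i x * cnj (A j j x))) = (cmod (\<Sum>i\<in>UNIV. A i i x))^2"
      by (metis Re_complex_of_real complex_norm_square)
  qed
  finally show ?thesis .
qed

lemma korn_tpderiv3:
  fixes \<phi> :: "real^3 \<Rightarrow> complex^3" and c :: "real^3"
  assumes \<phi>: "C2_periodic \<phi>"
  defines "A \<equiv> \<lambda>i j. tpderiv3 c (\<lambda>x. \<phi> x $ i) j"
  shows "integral unit_cube3 (\<lambda>x. \<Sum>i\<in>UNIV. \<Sum>j\<in>UNIV. (cmod (A i j x))^2)
    \<le> 2 * integral unit_cube3 (\<lambda>x. \<Sum>i\<in>UNIV. \<Sum>j\<in>UNIV. (cmod ((A i j x + A j i x) / 2))^2)"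
proof -
  have cont: "continuous_on UNIV (A i j)" for i j
    using C2_periodic_component[OF \<phi>, of i]
    unfolding A_def C2_periodic_def by (simp add: continuous_on_tpderiv3)
  have "0 \<le> integral unit_cube3 (\<lambda>x. \<Sum>i\<in>UNIV. \<Sum>j\<in>UNIV. Re (A i j x * cnj (A j i x)))"
    unfolding A_def integral_tpderiv3_cross_terms[OF \<phi>]
    by (rule integral_nonneg_unconditional) simp
  moreover have "integral unit_cube3 (\<lambda>x. \<Sum>i\<in>UNIV. \<Sum>j\<in>UNIV. (cmod ((A i j x + A j i x) / 2))^2)
      = (1/2) * integral unit_cube3 (\<lambda>x. \<Sum>i\<in>UNIV. \<Sum>j\<in>UNIV. (cmod (A i j x))^2)
        + (1/2) * integral unit_cube3 (\<lambda>x. \<Sum>i\<in>UNIV. \<Sum>j\<in>UNIV. Re (A i j x * cnj (A j i x)))"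
    unfolding sum_cmod_sym_square
    by (subst integral_add) (auto intro!: integrable_continuous_UNIV continuous_intros cont)
  ultimately show ?thesis by simp
qed

lemma cos_ge_one_minus_half_square:
  fixes x :: real
  assumes "0 \<le> x"
  shows "1 - x^2 / 2 \<le> cos x"
proof -
  have "(\<lambda>x. cos x - 1 + x^2 / 2) 0 \<le> (\<lambda>x. cos x - 1 + x^2 / 2) x"
  proof (rule DERIV_nonneg_imp_nondecreasing[OF assms])
    fix t :: real assume "0 \<le> t" "t \<le> x"
    show "\<exists>d. ((\<lambda>x. cos x - 1 + x^2 / 2) has_real_derivative d) (at t) \<and> 0 \<le> d"
      by (rule exI[of _ "- sin t + t"]) (auto intro!: derivative_eq_intros sin_x_le_x \<open>0 \<le> t\<close>)
  qed
  then show ?thesis by simp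
qed

lemma sin_ge_sub_cube:
  fixes y :: real
  assumes "0 \<le> y"
  shows "y - y^3 / 6 \<le> sin y"
proof -
  have "(\<lambda>x. sin x - x + x^3 / 6) 0 \<le> (\<lambda>x. sin x - x + x^3 / 6) y"
  proof (rule DERIV_nonneg_imp_nondecreasing[OF assms])
    fix t :: real assume "0 \<le> t" "t \<le> y"
    show "\<exists>d. ((\<lambda>x. sin x - x + x^3 / 6) has_real_derivative d) (at t) \<and> 0 \<le> d"
      by (rule exI[of _ "cos t - 1 + t^2 / 2"])
        (use cos_ge_one_minus_half_square[OF \<open>0 \<le> t\<close>] in
          \<open>auto intro!: derivative_eq_intros simp: power2_eq_square power3_eq_cube\<close>)
  qed
  then show ?thesis by simp
qed

lemma sin_ge_half:
  fixes y :: real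
  assumes y: "0 \<le> y" "y \<le> 8/5"
  shows "y / 2 \<le> sin y"
proof -
  have "y^2 \<le> (8/5)^2" using y by (intro power_mono) auto
  then have "y * y^2 \<le> y * 3" using y by (intro mult_left_mono) (auto simp: power2_eq_square)
  then have "y / 2 \<le> y - y^3 / 6" by (simp add: power3_eq_cube power2_eq_square)
  with sin_ge_sub_cube[OF y(1)] show ?thesis by simp
qed

lemma cmod_exp_i_minus_one_ge:
  fixes a :: real
  assumes a: "\<bar>a\<bar> \<le> pi"
  shows "a^2 / 4 \<le> (cmod (exp (\<i> * of_real a) - 1))^2"
proof -
  have "(cmod (exp (\<i> * of_real a) - 1))^2 = (cos a - 1)^2 + (sin a)^2"
    by (simp add: cmod_power2 Re_exp Im_exp)
  also have "\<dots> = 2 - 2 * cos \<bar>a\<bar>"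
    using sin_cos_squared_add[of a] by (simp add: power2_eq_square algebra_simps)
  also have "\<dots> = 4 * (sin (\<bar>a\<bar> / 2))^2"
    using cos_double_sin[of "\<bar>a\<bar> / 2"] by simp
  finally have eq: "(cmod (exp (\<i> * of_real a) - 1))^2 = 4 * (sin (\<bar>a\<bar> / 2))^2" .
  have "\<bar>a\<bar> / 2 \<le> 8/5" using a pi_approx by simp
  then have "\<bar>a\<bar> / 4 \<le> sin (\<bar>a\<bar> / 2)" using sin_ge_half[of "\<bar>a\<bar> / 2"] by simp
  then have "(\<bar>a\<bar> / 4)^2 \<le> (sin (\<bar>a\<bar> / 2))^2" by (intro power_mono) auto
  then show ?thesis unfolding eq by (simp add: power2_eq_square)
qed

text \<open>Along the unit line in direction \<open>j\<close>, \<open>exp (i t c\<^sub>j) f\<close> has derivative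
  \<open>exp (i t c\<^sub>j) D\<^sub>j f\<close>, and by periodicity its values at \<open>t = 0\<close> and \<open>t = 1\<close> differ by
  \<open>(exp (i c\<^sub>j) - 1) f x\<close>.\<close>

lemma tpderiv3_line_bound:
  assumes f: "C1_periodic f"
  shows "cmod (exp (\<i> * of_real (c$j)) - 1) * cmod (f x)
    \<le> integral {0..1} (\<lambda>t. cmod (tpderiv3 c f j (x + t *\<^sub>R axis j 1)))"
proof -
  define z where "z = \<i> * of_real (c$j)"
  define H where "H = (\<lambda>t::real. exp (z * of_real t) * f (x + t *\<^sub>R axis j 1))"
  define H' where "H' = (\<lambda>t::real. exp (z * of_real t) * tpderiv3 c f j (x + t *\<^sub>R axis j 1))"
  have deriv_f: "has_pderiv3 f j (pderiv3 f j)" and cont: "continuous_on UNIV (tpderiv3 c f j)"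
    using f continuous_on_tpderiv3[OF f] by (auto simp: C1_periodic_def)
  have dE: "((\<lambda>t. exp (z * of_real t)) has_vector_derivative exp (z * of_real t) * z) (at t)" for t :: real
    by (rule has_vector_derivative_real_field) (auto intro!: derivative_eq_intros)
  have dF: "((\<lambda>t. f (x + t *\<^sub>R axis j 1)) has_vector_derivative pderiv3 f j (x + t *\<^sub>R axis j 1)) (at t)" for t :: real
    using has_vector_derivative_along_line[of f "axis j 1" "pderiv3 f j"] deriv_f
    unfolding has_pderiv3_def by blast
  have "(H has_vector_derivative H' t) (at t within {0..1})" for t
    unfolding H_def H'_def using has_vector_derivative_mult[OF dE dF]
    by (auto simp: tpderiv3_def z_def algebra_simps intro: has_vector_derivative_at_within)
  then have ftc: "(H' has_integral H 1 - H 0) {0..1}"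
    by (intro fundamental_theorem_of_calculus) auto
  have "H 1 - H 0 = (exp z - 1) * f x"
    using periodic3_add_axis[of f x j] f by (simp add: H_def C1_periodic_def algebra_simps)
  then have "cmod (exp z - 1) * cmod (f x) = cmod (integral {0..1} H')"
    using ftc by (simp add: integral_unique norm_mult)
  also have "\<dots> \<le> integral {0..1} (\<lambda>t. cmod (tpderiv3 c f j (x + t *\<^sub>R axis j 1)))"
  proof (rule integral_norm_bound_integral)
    show "H' integrable_on {0..1}" using ftc by blast
    show "(\<lambda>t. cmod (tpderiv3 c f j (x + t *\<^sub>R axis j 1))) integrable_on {0..1}"
      by (intro integrable_continuous_interval continuous_intros continuous_on_compose2[OF cont]) auto
    fix t :: real
    have unit: "cmod (exp (z * of_real t)) = 1"
      unfolding z_def by (metis mult.assoc norm_exp_i_times of_real_mult)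
    show "norm (H' t) \<le> cmod (tpderiv3 c f j (x + t *\<^sub>R axis j 1))"
      unfolding H'_def norm_mult unit by simp
  qed
  finally show ?thesis by (simp add: z_def)
qed

lemma square_integral_unit_interval_le:
  fixes a :: "real \<Rightarrow> real"
  assumes "continuous_on {0..1} a"
  shows "(integral {0..1} a)^2 \<le> integral {0..1} (\<lambda>t. (a t)^2)"
proof (rule square_integral_le_integral_square)
  show "a integrable_on {0..1}" "(\<lambda>t. (a t)^2) integrable_on {0..1}"
    using assms by (auto intro!: integrable_continuous_interval continuous_intros)
  show "((\<lambda>x. 1::real) has_integral 1) {0..1::real}"
    using has_integral_const_real[of "1::real" 0 1] by simp
qed

lemma continuous_on_line_integral:
  fixes F :: "'a::real_normed_vector \<Rightarrow> 'b::banach"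
  assumes "continuous_on UNIV F"
  shows "continuous_on S (\<lambda>x. integral {0..1} (\<lambda>t. F (x + t *\<^sub>R v)))"
proof -
  have "continuous_on (S \<times> cbox 0 1) (\<lambda>(x, t::real). F (x + t *\<^sub>R v))"
    unfolding case_prod_unfold by (intro continuous_on_compose2[OF assms] continuous_intros) auto
  from integral_continuous_on_param[OF this] show ?thesis by simp
qed

lemma integral_unit_cube3_le_line_average:
  fixes F G :: "real^3 \<Rightarrow> real"
  assumes cont: "continuous_on UNIV F" "continuous_on UNIV G"
    and per: "\<And>x. G (x + axis j 1) = G x"
    and bound: "\<And>x. F x \<le> integral {0..1} (\<lambda>t. G (x + t *\<^sub>R axis j 1))"
  shows "integral unit_cube3 F \<le> integral unit_cube3 G"
proof -
  have "integral unit_cube3 F \<le> integral unit_cube3 (\<lambda>x. integral {0..1} (\<lambda>t. G (x + t *\<^sub>R axis j 1)))"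
    using cont bound
    by (intro integral_le integrable_continuous_UNIV continuous_on_line_integral) auto
  also have "\<dots> = integral unit_cube3 G"
    using integral_unit_cube_line_average[OF cont(2) per] by simp
  finally show ?thesis .
qed

lemma integral_tpderiv3_lower_bound:
  assumes f: "C1_periodic f" and cj: "\<bar>c$j\<bar> \<le> pi"
  shows "((c$j)^2 / 4) * integral unit_cube3 (\<lambda>x. (cmod (f x))^2)
    \<le> integral unit_cube3 (\<lambda>x. (cmod (tpderiv3 c f j x))^2)"
proof -
  have cont_f: "continuous_on UNIV f" using f by (simp add: C1_periodic_def)
  have cont_D: "continuous_on UNIV (tpderiv3 c f j)" by (rule continuous_on_tpderiv3[OF f])
  have "integral unit_cube3 (\<lambda>x. ((c$j)^2 / 4) * (cmod (f x))^2)
      \<le> integral unit_cube3 (\<lambda>x. (cmod (tpderiv3 c f j x))^2)"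
  proof (rule integral_unit_cube3_le_line_average)
    show "(\<lambda>x. (cmod (tpderiv3 c f j x))^2) (x + axis j 1) = (cmod (tpderiv3 c f j x))^2" for x
      using periodic3_add_axis[OF periodic3_tpderiv3[OF f]] by simp
    fix x
    have "((c$j)^2 / 4) * (cmod (f x))^2 \<le> (cmod (exp (\<i> * of_real (c$j)) - 1))^2 * (cmod (f x))^2"
      by (intro mult_right_mono cmod_exp_i_minus_one_ge cj) auto
    also have "\<dots> \<le> (integral {0..1} (\<lambda>t. cmod (tpderiv3 c f j (x + t *\<^sub>R axis j 1))))^2"
      unfolding power_mult_distrib[symmetric] by (intro power_mono tpderiv3_line_bound f) auto
    also have "\<dots> \<le> integral {0..1} (\<lambda>t. (cmod (tpderiv3 c f j (x + t *\<^sub>R axis j 1)))^2)"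
      by (intro square_integral_unit_interval_le continuous_intros continuous_on_compose2[OF cont_D]) auto
    finally show "((c$j)^2 / 4) * (cmod (f x))^2 \<le> integral {0..1} (\<lambda>t. (cmod (tpderiv3 c f j (x + t *\<^sub>R axis j 1)))^2)" .
  qed (intro continuous_intros cont_f cont_D)+
  then show ?thesis by simp
qed

section \<open>Line averages and the Poincare-Wirtinger inequality\<close>

definition line_average :: "(real^3 \<Rightarrow> 'b::banach) \<Rightarrow> 3 \<Rightarrow> real^3 \<Rightarrow> 'b" where
  "line_average h j x = integral {0..1} (\<lambda>t. h (x + t *\<^sub>R axis j 1))"

lemma continuous_on_line_average:
  "continuous_on UNIV h \<Longrightarrow> continuous_on UNIV (line_average h j)"
  unfolding line_average_def[abs_def] by (rule continuous_on_line_integral)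

lemma integrable_on_line:
  fixes h :: "'a::real_normed_vector \<Rightarrow> 'b::banach"
  assumes "continuous_on UNIV h"
  shows "(\<lambda>t. h (x + t *\<^sub>R v)) integrable_on {a..b}"
  by (intro integrable_continuous_interval continuous_on_compose2[OF assms] continuous_intros) auto

lemma line_average_shift:
  assumes "\<And>y. h (y + v) = h y"
  shows "line_average h j (x + v) = line_average h j x"
proof -
  have "h (x + v + t *\<^sub>R axis j 1) = h (x + t *\<^sub>R axis j 1)" for t
    using assms[of "x + t *\<^sub>R axis j 1"] by (simp add: algebra_simps)
  then show ?thesis unfolding line_average_def by simp
qed

lemma periodic3_line_average: "periodic3 h \<Longrightarrow> periodic3 (line_average h j)"
  unfolding periodic3_def by (auto intro: line_average_shift)

lemma line_average_translate_axis:
  fixes h :: "real^3 \<Rightarrow> 'b::banach"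
  assumes cont: "continuous_on UNIV h" and per: "periodic3 h" and s: "0 \<le> s" "s \<le> 1"
  shows "line_average h j (x + s *\<^sub>R axis j 1) = line_average h j x"
proof -
  define F where "F = (\<lambda>t::real. h (x + t *\<^sub>R axis j 1))"
  have "continuous_on UNIV F"
    unfolding F_def by (intro continuous_on_compose2[OF cont] continuous_intros) auto
  moreover have "F (t + 1) = F t" for t
    using periodic3_add_axis[OF per, of "x + t *\<^sub>R axis j 1"] by (simp add: F_def algebra_simps)
  ultimately have "integral (cbox 0 One) (\<lambda>t. F (t + s *\<^sub>R 1)) = integral (cbox 0 One) F"
    using s by (intro integral_unit_cube_translate_periodic) auto
  moreover have "F (t + s) = h (x + s *\<^sub>R axis j 1 + t *\<^sub>R axis j 1)" for t
    by (simp add: F_def algebra_simps)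
  ultimately show ?thesis unfolding line_average_def by (simp add: F_def)
qed

lemma line_average_diff:
  fixes a b :: "real^3 \<Rightarrow> 'b::banach"
  assumes "continuous_on UNIV a" "continuous_on UNIV b"
  shows "line_average (\<lambda>x. a x - b x) j x = line_average a j x - line_average b j x"
  unfolding line_average_def using assms by (intro integral_diff integrable_on_line)

lemma L2_norm_line_average_le:
  fixes h :: "real^3 \<Rightarrow> 'b::euclidean_space"
  assumes cont: "continuous_on UNIV h" and per: "periodic3 h"
  shows "L2_norm unit_cube3 (line_average h j) \<le> L2_norm unit_cube3 h"
  unfolding L2_norm_def
proof (intro real_sqrt_le_mono integral_unit_cube3_le_line_average)
  fix x
  have "norm (line_average h j x) \<le> integral {0..1} (\<lambda>t. norm (h (x + t *\<^sub>R axis j 1)))"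
    unfolding line_average_def using cont
    by (intro integral_norm_bound_integral integrable_on_line continuous_intros) auto
  then have "(norm (line_average h j x))^2 \<le> (integral {0..1} (\<lambda>t. norm (h (x + t *\<^sub>R axis j 1))))^2"
    by (intro power_mono) auto
  also have "\<dots> \<le> integral {0..1} (\<lambda>t. (norm (h (x + t *\<^sub>R axis j 1)))^2)"
    by (intro square_integral_unit_interval_le continuous_intros continuous_on_compose2[OF cont]) auto
  finally show "(norm (line_average h j x))^2 \<le> integral {0..1} (\<lambda>t. (norm (h (x + t *\<^sub>R axis j 1)))^2)" .
qed (auto intro!: continuous_intros cont continuous_on_line_average simp: periodic3_add_axis[OF per])

lemma norm_sub_line_average_le:
  fixes h :: "real^3 \<Rightarrow> 'b::euclidean_space"
  assumes cont: "continuous_on UNIV h" and deriv: "has_pderiv3 h j (pderiv3 h j)"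
    and cont': "continuous_on UNIV (pderiv3 h j)"
  shows "norm (h x - line_average h j x) \<le> integral {0..1} (\<lambda>s. norm (pderiv3 h j (x + s *\<^sub>R axis j 1)))"
    (is "_ \<le> ?L")
proof -
  have step: "norm (h x - h (x + t *\<^sub>R axis j 1)) \<le> ?L" if t: "t \<in> {0..1}" for t
  proof -
    have "((\<lambda>s. pderiv3 h j (x + s *\<^sub>R axis j 1)) has_integral h (x + t *\<^sub>R axis j 1) - h x) {0..t}"
      using has_integral_derivative_along_line[of h "axis j 1" "pderiv3 h j" 0 t x] deriv t
      by (simp add: has_pderiv3_def)
    then have "norm (h x - h (x + t *\<^sub>R axis j 1)) = norm (integral {0..t} (\<lambda>s. pderiv3 h j (x + s *\<^sub>R axis j 1)))"
      by (simp add: integral_unique norm_minus_commute)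
    also have "\<dots> \<le> integral {0..t} (\<lambda>s. norm (pderiv3 h j (x + s *\<^sub>R axis j 1)))"
      using cont' by (intro integral_norm_bound_integral integrable_on_line continuous_intros) auto
    also have "\<dots> \<le> ?L"
      using t cont' by (intro integral_subset_le integrable_on_line continuous_intros) auto
    finally show ?thesis .
  qed
  have "h x - line_average h j x = integral {0..1} (\<lambda>t. h x - h (x + t *\<^sub>R axis j 1))"
    unfolding line_average_def using cont by (subst integral_diff) (auto intro: integrable_on_line)
  also have "norm \<dots> \<le> integral {0..1} (\<lambda>t::real. ?L)"
    using step cont by (intro integral_norm_bound_integral integrable_on_line continuous_intros) auto
  finally show ?thesis by simp
qed

lemma L2_norm_sub_line_average_le:
  fixes h :: "real^3 \<Rightarrow> 'b::euclidean_space"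
  assumes cont: "continuous_on UNIV h" and deriv: "has_pderiv3 h j (pderiv3 h j)"
    and cont': "continuous_on UNIV (pderiv3 h j)" and per': "periodic3 (pderiv3 h j)"
  shows "L2_norm unit_cube3 (\<lambda>x. h x - line_average h j x) \<le> L2_norm unit_cube3 (pderiv3 h j)"
  unfolding L2_norm_def
proof (intro real_sqrt_le_mono integral_unit_cube3_le_line_average)
  fix x
  have "(norm (h x - line_average h j x))^2 \<le> (integral {0..1} (\<lambda>s. norm (pderiv3 h j (x + s *\<^sub>R axis j 1))))^2"
    by (intro power_mono norm_sub_line_average_le cont deriv cont') auto
  also have "\<dots> \<le> integral {0..1} (\<lambda>s. (norm (pderiv3 h j (x + s *\<^sub>R axis j 1)))^2)"
    by (intro square_integral_unit_interval_le continuous_intros continuous_on_compose2[OF cont']) auto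
  finally show "(norm (h x - line_average h j x))^2 \<le> integral {0..1} (\<lambda>s. (norm (pderiv3 h j (x + s *\<^sub>R axis j 1)))^2)" .
qed (auto intro!: continuous_intros cont cont' continuous_on_line_average simp: periodic3_add_axis[OF per'])

text \<open>The iterated average is invariant under translations along every axis.\<close>

lemma iterated_line_average_const:
  fixes f :: "real^3 \<Rightarrow> 'b::banach"
  assumes cont: "continuous_on UNIV f" and per: "periodic3 f" and x: "x \<in> unit_cube3"
  shows "line_average (line_average (line_average f 3) 2) 1 x = line_average (line_average (line_average f 3) 2) 1 0"
proof -
  define H3 where "H3 = line_average f 3"
  define H2 where "H2 = line_average H3 2"
  define H1 where "H1 = line_average H2 1"
  have cont3: "continuous_on UNIV H3" and cont2: "continuous_on UNIV H2"
    unfolding H3_def H2_def by (intro continuous_on_line_average cont)+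
  have per3: "periodic3 H3" and per2: "periodic3 H2"
    unfolding H3_def H2_def by (intro periodic3_line_average per)+
  have inv: "H1 (y + s *\<^sub>R axis k 1) = H1 y" if s: "0 \<le> s" "s \<le> 1" for y s k
  proof -
    consider "k = 1" | "k = 2" | "k = 3" using exhaust_3 by blast
    then show ?thesis
    proof cases
      case 1
      then show ?thesis unfolding H1_def using line_average_translate_axis[OF cont2 per2 s] by simp
    next
      case 2
      then have "H2 (z + s *\<^sub>R axis k 1) = H2 z" for z
        unfolding H2_def using line_average_translate_axis[OF cont3 per3 s] by simp
      then show ?thesis unfolding H1_def by (rule line_average_shift)
    next
      case 3
      then have "H3 (z + s *\<^sub>R axis k 1) = H3 z" for z
        unfolding H3_def using line_average_translate_axis[OF cont per s] by simp
      then have "H2 (z + s *\<^sub>R axis k 1) = H2 z" for z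
        unfolding H2_def by (rule line_average_shift)
      then show ?thesis unfolding H1_def by (rule line_average_shift)
    qed
  qed
  have "0 \<le> x$k \<and> x$k \<le> 1" for k
    using x by (simp add: mem_unit_cube3)
  moreover have "x = ((0 + (x$1) *\<^sub>R axis 1 1) + (x$2) *\<^sub>R axis 2 1) + (x$3) *\<^sub>R axis 3 1"
    by (auto simp: vec_eq_iff axis_def forall_3)
  ultimately have "H1 x = H1 0"
    by (metis inv)
  then show ?thesis unfolding H1_def H2_def H3_def .
qed

lemma iterated_line_average_telescope:
  fixes \<phi> :: "real^3 \<Rightarrow> 'b::banach"
  assumes cont: "continuous_on UNIV \<phi>"
  shows "\<phi> x - line_average (line_average (line_average \<phi> 3) 2) 1 x
    = (\<phi> x - line_average \<phi> 1 x) + line_average (\<lambda>y. \<phi> y - line_average \<phi> 2 y) 1 x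
      + line_average (line_average (\<lambda>y. \<phi> y - line_average \<phi> 3 y) 2) 1 x"
proof -
  let ?P = line_average
  have cont_P: "continuous_on UNIV (?P \<phi> j)" "continuous_on UNIV (?P (?P \<phi> j) k)" for j k
    by (intro continuous_on_line_average cont)+
  have "?P (\<lambda>y. \<phi> y - ?P \<phi> 3 y) 2 = (\<lambda>y. ?P \<phi> 2 y - ?P (?P \<phi> 3) 2 y)"
    by (rule ext, rule line_average_diff[OF cont cont_P(1)])
  then have "?P (?P (\<lambda>y. \<phi> y - ?P \<phi> 3 y) 2) 1 x = ?P (?P \<phi> 2) 1 x - ?P (?P (?P \<phi> 3) 2) 1 x"
    by (simp add: line_average_diff cont_P)
  moreover have "?P (\<lambda>y. \<phi> y - ?P \<phi> 2 y) 1 x = ?P \<phi> 1 x - ?P (?P \<phi> 2) 1 x"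
    by (rule line_average_diff[OF cont cont_P(1)])
  ultimately show ?thesis by simp
qed

lemma poincare_iterated_line_average:
  fixes \<phi> :: "real^3 \<Rightarrow> 'b::euclidean_space"
  assumes \<phi>: "C1_periodic \<phi>"
  shows "L2_norm unit_cube3 (\<lambda>x. \<phi> x - line_average (line_average (line_average \<phi> 3) 2) 1 x)
    \<le> L2_norm unit_cube3 (pderiv3 \<phi> 1) + L2_norm unit_cube3 (pderiv3 \<phi> 2) + L2_norm unit_cube3 (pderiv3 \<phi> 3)"
proof -
  have cont: "continuous_on UNIV \<phi>" and per: "periodic3 \<phi>"
    using \<phi> by (auto simp: C1_periodic_def)
  let ?P = line_average
  define A where "A = (\<lambda>x. \<phi> x - ?P \<phi> 1 x)"
  define B where "B = ?P (\<lambda>x. \<phi> x - ?P \<phi> 2 x) 1"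
  define C where "C = ?P (?P (\<lambda>x. \<phi> x - ?P \<phi> 3 x) 2) 1"
  have cont_diff: "continuous_on UNIV (\<lambda>x. \<phi> x - ?P \<phi> j x)" for j
    by (intro continuous_intros cont continuous_on_line_average)
  have per_diff: "periodic3 (\<lambda>x. \<phi> x - ?P \<phi> j x)" for j
    using per periodic3_line_average[OF per, of j] by (auto simp: periodic3_def)
  have sq: "square_integrable unit_cube3 A" "square_integrable unit_cube3 B" "square_integrable unit_cube3 C"
    unfolding A_def B_def C_def
    by (auto intro!: square_integrable_continuous integrable_continuous_UNIV continuous_intros
        cont continuous_on_line_average)
  have sub: "L2_norm unit_cube3 (\<lambda>x. \<phi> x - ?P \<phi> j x) \<le> L2_norm unit_cube3 (pderiv3 \<phi> j)" for j
    using \<phi> periodic3_pderiv3[OF per] by (intro L2_norm_sub_line_average_le) (auto simp: C1_periodic_def)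
  have "L2_norm unit_cube3 B \<le> L2_norm unit_cube3 (pderiv3 \<phi> 2)"
    unfolding B_def using L2_norm_line_average_le[OF cont_diff[of 2] per_diff[of 2], of 1] sub[of 2]
    by linarith
  moreover have "L2_norm unit_cube3 C \<le> L2_norm unit_cube3 (pderiv3 \<phi> 3)"
    unfolding C_def
    using L2_norm_line_average_le[OF continuous_on_line_average[OF cont_diff[of 3], of 2]
        periodic3_line_average[OF per_diff[of 3], of 2], of 1]
      L2_norm_line_average_le[OF cont_diff[of 3] per_diff[of 3], of 2] sub[of 3]
    by linarith
  moreover have "L2_norm unit_cube3 (\<lambda>x. \<phi> x - ?P (?P (?P \<phi> 3) 2) 1 x)
      \<le> L2_norm unit_cube3 A + L2_norm unit_cube3 B + L2_norm unit_cube3 C"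
    unfolding iterated_line_average_telescope[OF cont] B_def[symmetric] C_def[symmetric]
    using L2_norm_triangle[OF _ square_integrable_add[OF _ sq(1,2)] sq(3)] L2_norm_triangle[OF _ sq(1,2)]
    by (simp add: A_def)
  ultimately show ?thesis using sub[of 1] unfolding A_def by linarith
qed

lemma poincare_wirtinger_unit_cube3:
  fixes \<phi> :: "real^3 \<Rightarrow> complex^3"
  assumes \<phi>: "C1_periodic \<phi>"
  shows "L2_norm unit_cube3 (\<lambda>x. \<phi> x - integral unit_cube3 \<phi>) \<le> 6 * L2_norm unit_cube3 (grad3 \<phi>)"
proof -
  have cont: "continuous_on UNIV \<phi>" and per: "periodic3 \<phi>" using \<phi> by (auto simp: C1_periodic_def)
  let ?P = "line_average (line_average (line_average \<phi> 3) 2) 1"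
  have pderiv_le: "L2_norm unit_cube3 (pderiv3 \<phi> j) \<le> L2_norm unit_cube3 (grad3 \<phi>)" for j
    using \<phi> norm_pderiv3_le_grad3[of \<phi> j] continuous_on_grad3[OF \<phi>]
    by (intro L2_norm_mono integrable_continuous_UNIV continuous_intros) (auto simp: C1_periodic_def)
  have "L2_norm unit_cube3 (\<lambda>x. \<phi> x - integral unit_cube3 \<phi>) \<le> 2 * L2_norm unit_cube3 (\<lambda>x. \<phi> x - ?P 0)"
    by (intro L2_norm_sub_integral_le unit_cube3_has_integral_one square_integrable_continuous
        integrable_continuous_UNIV continuous_intros cont) auto
  also have "L2_norm unit_cube3 (\<lambda>x. \<phi> x - ?P 0) = L2_norm unit_cube3 (\<lambda>x. \<phi> x - ?P x)"
    unfolding L2_norm_def by (simp add: iterated_line_average_const[OF cont per] cong: integral_cong)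
  also have "2 * \<dots> \<le> 2 * (L2_norm unit_cube3 (pderiv3 \<phi> 1) + L2_norm unit_cube3 (pderiv3 \<phi> 2) + L2_norm unit_cube3 (pderiv3 \<phi> 3))"
    using poincare_iterated_line_average[OF \<phi>] by simp
  also have "\<dots> \<le> 6 * L2_norm unit_cube3 (grad3 \<phi>)"
    using pderiv_le[of 1] pderiv_le[of 2] pderiv_le[of 3] by simp
  finally show ?thesis .
qed

section \<open>The twisted symmetric gradient\<close>

lemma scaleR_complex: "r *\<^sub>R (z::complex) = of_real r * z"
  by (simp add: scaleR_conv_of_real)

lemma symm_nth: "symm A $ i $ j = (A$i$j + A$j$i) / 2"
  by (simp add: symm_def transpose_def scaleR_complex)

lemma imul_nth: "imul A $ i $ j = \<i> * A$i$j"
  by (simp add: imul_def)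

lemma Xchi_nth: "Xchi c v $ i $ j = (v$i * of_real (c$j) + v$j * of_real (c$i)) / 2"
  by (simp add: Xchi_def symm_nth)

lemma bounded_linear_symm: "bounded_linear symm"
  unfolding linear_conv_bounded_linear[symmetric]
  by (rule linearI) (simp_all add: vec_eq_iff symm_nth add_divide_distrib scaleR_complex algebra_simps)

lemma bounded_linear_imul: "bounded_linear imul"
  unfolding linear_conv_bounded_linear[symmetric]
  by (rule linearI) (simp_all add: vec_eq_iff imul_nth scaleR_complex algebra_simps)

lemma bounded_linear_Xchi: "bounded_linear (Xchi c)"
  unfolding linear_conv_bounded_linear[symmetric]
  by (rule linearI) (simp_all add: vec_eq_iff Xchi_nth add_divide_distrib scaleR_complex algebra_simps)

lemma norm_symm_le: "norm (symm A) \<le> norm A"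
proof -
  have "(norm (transpose A))^2 = (norm A)^2"
    unfolding norm_square_vec transpose_def vec_lambda_beta by (rule sum.swap)
  then have "norm (transpose A) = norm A" by (simp add: power2_eq_iff_nonneg)
  moreover have "norm (symm A) \<le> (1/2) * (norm A + norm (transpose A))"
    unfolding symm_def by (simp add: norm_triangle_ineq)
  ultimately show ?thesis by simp
qed

lemma norm_imul: "norm (imul A) = norm A"
proof -
  have "(norm (imul A))^2 = (norm A)^2"
    unfolding norm_square_vec by (simp add: imul_nth norm_mult)
  then show ?thesis by (simp add: power2_eq_iff_nonneg)
qed

lemma norm_Xchi_le: "norm (Xchi c v) \<le> norm c * norm v"
proof -
  have "(norm (\<chi> i j. v $ i * complex_of_real (c $ j)))^2 = (\<Sum>i\<in>UNIV. \<Sum>j\<in>UNIV. (cmod (v$i))^2 * (c$j)^2)"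
    unfolding norm_square_vec by (simp add: norm_mult power_mult_distrib)
  also have "\<dots> = (\<Sum>i\<in>UNIV. (cmod (v$i))^2) * (\<Sum>j\<in>UNIV. (c$j)^2)"
    by (simp add: sum_product)
  also have "\<dots> = (norm c * norm v)^2"
    by (simp add: norm_square_vec power_mult_distrib)
  finally have "norm (\<chi> i j. v $ i * complex_of_real (c $ j)) = norm c * norm v"
    by (simp add: power2_eq_iff_nonneg)
  then show ?thesis
    unfolding Xchi_def using norm_symm_le by metis
qed

definition twisted_sym_field :: "real^3 \<Rightarrow> (real^3 \<Rightarrow> complex^3) \<Rightarrow> (real^3 \<Rightarrow> complex^3^3) \<Rightarrow> real^3 \<Rightarrow> complex^3^3" where
  "twisted_sym_field c u Du x = symm (Du x) + imul (Xchi c (u x))"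

lemma pderiv3_component_C1_periodic:
  fixes \<phi> :: "real^3 \<Rightarrow> complex^3"
  shows "C1_periodic \<phi> \<Longrightarrow> pderiv3 (\<lambda>y. \<phi> y $ i) j = (\<lambda>y. pderiv3 \<phi> j y $ i)"
  by (intro pderiv3_component) (auto simp: C1_periodic_def)

lemma twisted_sym_field_grad3_nth:
  fixes \<phi> :: "real^3 \<Rightarrow> complex^3"
  assumes "C1_periodic \<phi>"
  shows "twisted_sym_field c \<phi> (grad3 \<phi>) x $ i $ j
    = (tpderiv3 c (\<lambda>y. \<phi> y $ i) j x + tpderiv3 c (\<lambda>y. \<phi> y $ j) i x) / 2"
  unfolding twisted_sym_field_def tpderiv3_def pderiv3_component_C1_periodic[OF assms]
  by (simp add: symm_nth imul_nth Xchi_nth grad3_def algebra_simps add_divide_distrib)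

lemma grad3_nth:
  fixes \<phi> :: "real^3 \<Rightarrow> complex^3"
  assumes "C1_periodic \<phi>"
  shows "grad3 \<phi> x $ i $ j = tpderiv3 c (\<lambda>y. \<phi> y $ i) j x - \<i> * of_real (c$j) * \<phi> x $ i"
  unfolding grad3_def tpderiv3_def pderiv3_component_C1_periodic[OF assms] by simp

lemma integral_sum_tpderiv3_le_twisted_sym_field:
  fixes \<phi> :: "real^3 \<Rightarrow> complex^3"
  assumes \<phi>: "C2_periodic \<phi>"
  shows "integral unit_cube3 (\<lambda>x. \<Sum>i\<in>UNIV. \<Sum>j\<in>UNIV. (cmod (tpderiv3 c (\<lambda>y. \<phi> y $ i) j x))^2)
    \<le> 2 * integral unit_cube3 (\<lambda>x. (norm (twisted_sym_field c \<phi> (grad3 \<phi>) x))^2)"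
proof -
  have "C1_periodic \<phi>" using \<phi> by (simp add: C2_periodic_def)
  then have "(norm (twisted_sym_field c \<phi> (grad3 \<phi>) x))^2
      = (\<Sum>i\<in>UNIV. \<Sum>j\<in>UNIV. (cmod ((tpderiv3 c (\<lambda>y. \<phi> y $ i) j x + tpderiv3 c (\<lambda>y. \<phi> y $ j) i x) / 2))^2)" for x
    by (simp add: norm_square_vec twisted_sym_field_grad3_nth)
  with korn_tpderiv3[OF \<phi>, of c] show ?thesis by simp
qed

lemma integral_norm_square_le_twisted_sym_field:
  fixes \<phi> :: "real^3 \<Rightarrow> complex^3"
  assumes \<phi>: "C2_periodic \<phi>" and c: "\<And>j. \<bar>c$j\<bar> \<le> pi"
  shows "(norm c)^2 * integral unit_cube3 (\<lambda>x. (norm (\<phi> x))^2)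
    \<le> 8 * integral unit_cube3 (\<lambda>x. (norm (twisted_sym_field c \<phi> (grad3 \<phi>) x))^2)"
proof -
  define A where "A = (\<lambda>i j. tpderiv3 c (\<lambda>y. \<phi> y $ i) j)"
  have \<phi>i: "C1_periodic (\<lambda>y. \<phi> y $ i)" for i
    using C2_periodic_component[OF \<phi>, of i] by (simp add: C2_periodic_def)
  have cont_\<phi>: "continuous_on UNIV \<phi>" using \<phi> by (simp add: C2_periodic_def C1_periodic_def)
  have cont_A: "continuous_on UNIV (A i j)" for i j
    unfolding A_def by (rule continuous_on_tpderiv3[OF \<phi>i])
  have "(norm c)^2 * integral unit_cube3 (\<lambda>x. (norm (\<phi> x))^2)
      = (\<Sum>j\<in>UNIV. \<Sum>i\<in>UNIV. (c$j)^2 * integral unit_cube3 (\<lambda>x. (cmod (\<phi> x $ i))^2))"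
    unfolding norm_square_vec[of c] norm_square_vec[of "\<phi> _"]
    by (subst integral_sum) (auto intro!: integrable_continuous_UNIV continuous_intros cont_\<phi> simp: sum_product)
  also have "\<dots> \<le> (\<Sum>j\<in>UNIV. \<Sum>i\<in>UNIV. 4 * integral unit_cube3 (\<lambda>x. (cmod (A i j x))^2))"
    using integral_tpderiv3_lower_bound[OF \<phi>i c] unfolding A_def
    by (intro sum_mono) (simp add: field_simps)
  also have "\<dots> = 4 * (\<Sum>i\<in>UNIV. \<Sum>j\<in>UNIV. integral unit_cube3 (\<lambda>x. (cmod (A i j x))^2))"
    by (subst sum.swap) (simp add: sum_distrib_left)
  also have "\<dots> = 4 * integral unit_cube3 (\<lambda>x. \<Sum>i\<in>UNIV. \<Sum>j\<in>UNIV. (cmod (A i j x))^2)"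
    by (subst integral_sum_sum) (auto intro!: integrable_continuous_UNIV continuous_intros cont_A)
  also have "\<dots> \<le> 8 * integral unit_cube3 (\<lambda>x. (norm (twisted_sym_field c \<phi> (grad3 \<phi>) x))^2)"
    using integral_sum_tpderiv3_le_twisted_sym_field[OF \<phi>, of c] unfolding A_def by simp
  finally show ?thesis .
qed

lemma norm_square_grad3_le:
  fixes \<phi> :: "real^3 \<Rightarrow> complex^3"
  assumes \<phi>: "C1_periodic \<phi>"
  shows "(norm (grad3 \<phi> x))^2
    \<le> 2 * (\<Sum>i\<in>UNIV. \<Sum>j\<in>UNIV. (cmod (tpderiv3 c (\<lambda>y. \<phi> y $ i) j x))^2) + 2 * ((norm c)^2 * (norm (\<phi> x))^2)"
proof -
  have "(norm (grad3 \<phi> x))^2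
      = (\<Sum>i\<in>UNIV. \<Sum>j\<in>UNIV. (cmod (tpderiv3 c (\<lambda>y. \<phi> y $ i) j x - \<i> * of_real (c$j) * \<phi> x $ i))^2)"
    by (simp add: norm_square_vec grad3_nth[OF \<phi>, where c = c])
  also have "\<dots> \<le> (\<Sum>i\<in>UNIV. \<Sum>j\<in>UNIV. 2 * (cmod (tpderiv3 c (\<lambda>y. \<phi> y $ i) j x))^2 + 2 * ((c$j)^2 * (cmod (\<phi> x $ i))^2))"
  proof (intro sum_mono)
    fix i j
    have "(cmod (tpderiv3 c (\<lambda>y. \<phi> y $ i) j x - \<i> * of_real (c$j) * \<phi> x $ i))^2
        \<le> (cmod (tpderiv3 c (\<lambda>y. \<phi> y $ i) j x) + cmod (\<i> * of_real (c$j) * \<phi> x $ i))^2"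
      by (intro power_mono norm_triangle_ineq4) auto
    then show "(cmod (tpderiv3 c (\<lambda>y. \<phi> y $ i) j x - \<i> * of_real (c$j) * \<phi> x $ i))^2
        \<le> 2 * (cmod (tpderiv3 c (\<lambda>y. \<phi> y $ i) j x))^2 + 2 * ((c$j)^2 * (cmod (\<phi> x $ i))^2)"
      using sum_squares_bound[of "cmod (tpderiv3 c (\<lambda>y. \<phi> y $ i) j x)" "cmod (\<i> * of_real (c$j) * \<phi> x $ i)"]
      by (simp add: power2_sum norm_mult power_mult_distrib)
  qed
  also have "\<dots> = 2 * (\<Sum>i\<in>UNIV. \<Sum>j\<in>UNIV. (cmod (tpderiv3 c (\<lambda>y. \<phi> y $ i) j x))^2)
      + 2 * ((\<Sum>j\<in>UNIV. (c$j)^2) * (\<Sum>i\<in>UNIV. (cmod (\<phi> x $ i))^2))"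
    by (simp add: sum.distrib sum_distrib_left sum_product mult.commute)
  also have "\<dots> = 2 * (\<Sum>i\<in>UNIV. \<Sum>j\<in>UNIV. (cmod (tpderiv3 c (\<lambda>y. \<phi> y $ i) j x))^2) + 2 * ((norm c)^2 * (norm (\<phi> x))^2)"
    by (simp add: norm_square_vec)
  finally show ?thesis .
qed

lemma integral_grad3_square_le_twisted_sym_field:
  fixes \<phi> :: "real^3 \<Rightarrow> complex^3"
  assumes \<phi>: "C2_periodic \<phi>" and c: "\<And>j. \<bar>c$j\<bar> \<le> pi"
  shows "integral unit_cube3 (\<lambda>x. (norm (grad3 \<phi> x))^2)
    \<le> 20 * integral unit_cube3 (\<lambda>x. (norm (twisted_sym_field c \<phi> (grad3 \<phi>) x))^2)"
proof -
  have \<phi>1: "C1_periodic \<phi>" using \<phi> by (simp add: C2_periodic_def)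
  have cont_\<phi>: "continuous_on UNIV \<phi>" using \<phi>1 by (simp add: C1_periodic_def)
  have cont_grad: "continuous_on UNIV (grad3 \<phi>)"
    unfolding grad3_def[abs_def] using \<phi>1 by (intro continuous_intros) (auto simp: C1_periodic_def)
  have cont_A: "continuous_on UNIV (tpderiv3 c (\<lambda>y. \<phi> y $ i) j)" for i j
    using C2_periodic_component[OF \<phi>, of i] by (simp add: C2_periodic_def continuous_on_tpderiv3)
  have "integral unit_cube3 (\<lambda>x. (norm (grad3 \<phi> x))^2)
      \<le> integral unit_cube3 (\<lambda>x. 2 * (\<Sum>i\<in>UNIV. \<Sum>j\<in>UNIV. (cmod (tpderiv3 c (\<lambda>y. \<phi> y $ i) j x))^2)
          + 2 * ((norm c)^2 * (norm (\<phi> x))^2))"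
    using norm_square_grad3_le[OF \<phi>1]
    by (intro integral_le integrable_continuous_UNIV continuous_intros cont_grad cont_A cont_\<phi>) auto
  also have "\<dots> = 2 * integral unit_cube3 (\<lambda>x. \<Sum>i\<in>UNIV. \<Sum>j\<in>UNIV. (cmod (tpderiv3 c (\<lambda>y. \<phi> y $ i) j x))^2)
      + 2 * ((norm c)^2 * integral unit_cube3 (\<lambda>x. (norm (\<phi> x))^2))"
    by (subst integral_add) (auto intro!: integrable_continuous_UNIV continuous_intros cont_A cont_\<phi>)
  also have "\<dots> \<le> 20 * integral unit_cube3 (\<lambda>x. (norm (twisted_sym_field c \<phi> (grad3 \<phi>) x))^2)"
    using integral_sum_tpderiv3_le_twisted_sym_field[OF \<phi>, of c]
      integral_norm_square_le_twisted_sym_field[OF \<phi> c] by simp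
  finally show ?thesis .
qed

section \<open>The unit cell\<close>

lemma negligible_hyperplane_cart: "negligible {x::real^'n. x$k = a}"
  using negligible_standard_hyperplane[of "axis k (1::real)" a] by (simp add: inner_axis)

lemma cellY_subset_unit_cube3: "cellY \<subseteq> unit_cube3"
  unfolding cellY_def using mem_unit_cube3 by (auto intro: less_imp_le)

lemma negligible_unit_cube3_diff_cellY: "negligible (unit_cube3 - cellY)"
proof (rule negligible_subset)
  show "negligible ({x::real^3. x$1 = 1} \<union> {x. x$2 = 1} \<union> {x. x$3 = 1})"
    by (simp add: negligible_hyperplane_cart)
  show "unit_cube3 - cellY \<subseteq> {x. x$1 = 1} \<union> {x. x$2 = 1} \<union> {x. x$3 = 1}"
  proof
    fix x assume x: "x \<in> unit_cube3 - cellY"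
    then obtain k where "\<not> (0 \<le> x$k \<and> x$k < 1)" unfolding cellY_def by auto
    moreover have "0 \<le> x$k \<and> x$k \<le> 1" using x by (simp add: mem_unit_cube3)
    ultimately have "x$k = 1" by auto
    then show "x \<in> {x. x$1 = 1} \<union> {x. x$2 = 1} \<union> {x. x$3 = 1}" using exhaust_3[of k] by auto
  qed
qed

lemma has_integral_cellY_iff:
  fixes f :: "real^3 \<Rightarrow> 'b::banach"
  shows "(f has_integral y) cellY \<longleftrightarrow> (f has_integral y) unit_cube3"
  by (rule has_integral_spike_set_eq)
    (use cellY_subset_unit_cube3 in \<open>auto intro: negligible_subset[OF negligible_unit_cube3_diff_cellY]\<close>)

lemma integral_cellY:
  fixes f :: "real^3 \<Rightarrow> 'b::banach"
  shows "integral cellY f = integral unit_cube3 f"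
proof (cases "f integrable_on unit_cube3")
  case True
  then show ?thesis using has_integral_cellY_iff by (metis integrable_integral integral_unique)
next
  case False
  then have "\<not> f integrable_on cellY" using has_integral_cellY_iff by (auto simp: integrable_on_def)
  with False show ?thesis by (simp add: not_integrable_integral)
qed

lemma cellY_lebesgue: "cellY \<in> sets lebesgue"
proof -
  have "cellY = unit_cube3 - (unit_cube3 - cellY)" using cellY_subset_unit_cube3 by auto
  moreover have "unit_cube3 \<in> sets lebesgue" by simp
  ultimately show ?thesis using negligible_imp_sets[OF negligible_unit_cube3_diff_cellY] by (metis sets.Diff)
qed

lemma cellY_has_integral_one: "((\<lambda>x. 1::real) has_integral 1) cellY"
  using unit_cube3_has_integral_one by (simp add: has_integral_cellY_iff)

lemma L2_norm_cellY: "L2_norm cellY f = L2_norm unit_cube3 f"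
  unfolding L2_norm_def integral_cellY ..

lemma square_integrable_cellY_continuous:
  fixes f :: "real^3 \<Rightarrow> 'b::euclidean_space"
  assumes "continuous_on UNIV f"
  shows "square_integrable cellY f"
proof (rule square_integrable_continuous[OF assms cellY_lebesgue])
  have "(\<lambda>x. (norm (f x))^2) integrable_on unit_cube3"
    by (intro integrable_continuous_UNIV continuous_intros assms)
  then show "(\<lambda>x. (norm (f x))^2) integrable_on cellY"
    by (simp add: integrable_on_def has_integral_cellY_iff)
qed

lemma twisted_korn_C2_periodic:
  fixes \<phi> :: "real^3 \<Rightarrow> complex^3"
  assumes \<phi>: "C2_periodic \<phi>" and c: "\<And>j. \<bar>c$j\<bar> \<le> pi"
  shows "norm c * L2_norm cellY \<phi> \<le> 3 * L2_norm cellY (twisted_sym_field c \<phi> (grad3 \<phi>))"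
    and "L2_norm cellY (grad3 \<phi>) \<le> 5 * L2_norm cellY (twisted_sym_field c \<phi> (grad3 \<phi>))"
    and "L2_norm cellY (\<lambda>x. \<phi> x - integral cellY \<phi>) \<le> 30 * L2_norm cellY (twisted_sym_field c \<phi> (grad3 \<phi>))"
proof -
  let ?W = "L2_norm unit_cube3 (twisted_sym_field c \<phi> (grad3 \<phi>))"
  have W2: "integral unit_cube3 (\<lambda>x. (norm (twisted_sym_field c \<phi> (grad3 \<phi>) x))^2) = ?W^2"
    by (simp only: L2_norm_square)
  have "(norm c * L2_norm unit_cube3 \<phi>)^2 = (norm c)^2 * integral unit_cube3 (\<lambda>x. (norm (\<phi> x))^2)"
    by (simp only: power_mult_distrib L2_norm_square)
  also have "\<dots> \<le> 8 * ?W^2"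
    unfolding W2[symmetric] by (rule integral_norm_square_le_twisted_sym_field[OF \<phi> c])
  also have "\<dots> \<le> (3 * ?W)^2" by (simp add: power_mult_distrib)
  finally show "norm c * L2_norm cellY \<phi> \<le> 3 * L2_norm cellY (twisted_sym_field c \<phi> (grad3 \<phi>))"
    unfolding L2_norm_cellY by (rule power2_le_imp_le) (simp add: L2_norm_nonneg)
  have "(L2_norm unit_cube3 (grad3 \<phi>))^2 \<le> 20 * ?W^2"
    unfolding W2[symmetric] L2_norm_square by (rule integral_grad3_square_le_twisted_sym_field[OF \<phi> c])
  also have "\<dots> \<le> (5 * ?W)^2" by (simp add: power_mult_distrib)
  finally have grad: "L2_norm unit_cube3 (grad3 \<phi>) \<le> 5 * ?W"
    by (rule power2_le_imp_le) (simp add: L2_norm_nonneg)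
  then show "L2_norm cellY (grad3 \<phi>) \<le> 5 * L2_norm cellY (twisted_sym_field c \<phi> (grad3 \<phi>))"
    unfolding L2_norm_cellY .
  have "C1_periodic \<phi>" using \<phi> by (simp add: C2_periodic_def)
  then have "L2_norm unit_cube3 (\<lambda>x. \<phi> x - integral unit_cube3 \<phi>) \<le> 6 * L2_norm unit_cube3 (grad3 \<phi>)"
    by (rule poincare_wirtinger_unit_cube3)
  with grad show "L2_norm cellY (\<lambda>x. \<phi> x - integral cellY \<phi>) \<le> 30 * L2_norm cellY (twisted_sym_field c \<phi> (grad3 \<phi>))"
    unfolding L2_norm_cellY integral_cellY by linarith
qed

section \<open>Passage to the limit\<close>

lemma
  assumes u: "square_integrable cellY u" and Du: "square_integrable cellY Du"
  shows square_integrable_twisted_sym_field: "square_integrable cellY (twisted_sym_field c u Du)"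
    and L2_norm_twisted_sym_field_le:
      "L2_norm cellY (twisted_sym_field c u Du) \<le> L2_norm cellY Du + norm c * L2_norm cellY u"
proof -
  have imul_Xchi: "bounded_linear (\<lambda>v. imul (Xchi c v))"
    using bounded_linear_compose[OF bounded_linear_imul bounded_linear_Xchi] by (simp add: o_def)
  have sym: "square_integrable cellY (\<lambda>x. symm (Du x))" "L2_norm cellY (\<lambda>x. symm (Du x)) \<le> 1 * L2_norm cellY Du"
    using square_integrable_bounded_linear[OF cellY_lebesgue Du bounded_linear_symm, of 1]
      L2_norm_bounded_linear_le[OF cellY_lebesgue Du bounded_linear_symm, of 1]
    by (simp_all add: norm_symm_le)
  have X: "square_integrable cellY (\<lambda>x. imul (Xchi c (u x)))"
      "L2_norm cellY (\<lambda>x. imul (Xchi c (u x))) \<le> norm c * L2_norm cellY u"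
    using square_integrable_bounded_linear[OF cellY_lebesgue u imul_Xchi, of "norm c"]
      L2_norm_bounded_linear_le[OF cellY_lebesgue u imul_Xchi, of "norm c"]
    by (simp_all add: norm_imul norm_Xchi_le)
  show "square_integrable cellY (twisted_sym_field c u Du)"
    unfolding twisted_sym_field_def[abs_def] by (rule square_integrable_add[OF cellY_lebesgue sym(1) X(1)])
  show "L2_norm cellY (twisted_sym_field c u Du) \<le> L2_norm cellY Du + norm c * L2_norm cellY u"
    unfolding twisted_sym_field_def[abs_def]
    using L2_norm_triangle[OF cellY_lebesgue sym(1) X(1)] sym(2) X(2) by simp
qed

lemma twisted_sym_field_diff:
  "twisted_sym_field c u Du x - twisted_sym_field c v Dv x
    = twisted_sym_field c (\<lambda>x. u x - v x) (\<lambda>x. Du x - Dv x) x"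
  unfolding twisted_sym_field_def
  using linear_diff[OF bounded_linear.linear[OF bounded_linear_symm]]
    linear_diff[OF bounded_linear.linear[OF bounded_linear_imul]]
    linear_diff[OF bounded_linear.linear[OF bounded_linear_Xchi]]
  by simp

lemma L2_norm_twisted_sym_field_approx:
  fixes \<phi> :: "real^3 \<Rightarrow> complex^3"
  assumes u: "square_integrable cellY u" and Du: "square_integrable cellY Du" and \<phi>: "C1_periodic \<phi>"
  shows "L2_norm cellY (twisted_sym_field c \<phi> (grad3 \<phi>))
    \<le> L2_norm cellY (twisted_sym_field c u Du)
      + (L2_norm cellY (\<lambda>x. Du x - grad3 \<phi> x) + norm c * L2_norm cellY (\<lambda>x. u x - \<phi> x))"
proof -
  have sq_\<phi>: "square_integrable cellY \<phi>" and sq_grad: "square_integrable cellY (grad3 \<phi>)"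
    using \<phi> continuous_on_grad3[OF \<phi>]
    by (auto intro: square_integrable_cellY_continuous simp: C1_periodic_def)
  have "L2_norm cellY (twisted_sym_field c \<phi> (grad3 \<phi>))
      \<le> L2_norm cellY (twisted_sym_field c u Du)
        + L2_norm cellY (\<lambda>x. twisted_sym_field c \<phi> (grad3 \<phi>) x - twisted_sym_field c u Du x)"
    by (rule L2_norm_le_add_L2_norm_diff[OF cellY_lebesgue]
        square_integrable_twisted_sym_field sq_\<phi> sq_grad u Du)+
  also have "\<dots> \<le> L2_norm cellY (twisted_sym_field c u Du)
      + (L2_norm cellY (\<lambda>x. Du x - grad3 \<phi> x) + norm c * L2_norm cellY (\<lambda>x. u x - \<phi> x))"
    unfolding twisted_sym_field_diff
    using L2_norm_twisted_sym_field_le[OF square_integrable_diff[OF cellY_lebesgue sq_\<phi> u]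
        square_integrable_diff[OF cellY_lebesgue sq_grad Du]]
      L2_norm_minus_commute[of cellY "grad3 \<phi>" Du] L2_norm_minus_commute[of cellY \<phi> u]
    by simp
  finally show ?thesis .
qed

lemma L2Y_eq_L2_norm:
  fixes f :: "real^3 \<Rightarrow> 'b::euclidean_space"
  shows "L2Y f = L2_norm cellY f"
  by (simp add: L2Y_def L2_norm_def)

lemma H1per_approximation:
  assumes "H1per u Du"
  obtains \<phi> :: "nat \<Rightarrow> real^3 \<Rightarrow> complex^3"
  where "square_integrable cellY u" "square_integrable cellY Du" "\<And>n. C2_periodic (\<phi> n)"
    "(\<lambda>n. L2_norm cellY (\<lambda>x. u x - \<phi> n x)) \<longlonglongrightarrow> 0"
    "(\<lambda>n. L2_norm cellY (\<lambda>x. Du x - grad3 (\<phi> n) x)) \<longlonglongrightarrow> 0"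
proof -
  from assms obtain \<phi> :: "nat \<Rightarrow> real^3 \<Rightarrow> complex^3"
    where smooth: "\<And>n. smooth3 (\<phi> n) \<and> periodic3 (\<phi> n)"
      and "(\<lambda>n. L2Y (\<lambda>x. \<phi> n x - u x)) \<longlonglongrightarrow> 0" "(\<lambda>n. L2Y (\<lambda>x. grad3 (\<phi> n) x - Du x)) \<longlonglongrightarrow> 0"
    unfolding H1per_def by blast
  moreover have "square_integrable cellY u" "square_integrable cellY Du"
    using assms unfolding H1per_def square_integrable_def by auto
  moreover have "C2_periodic (\<phi> n)" for n
    using smooth C2_periodic_if_smooth3 by blast
  ultimately show ?thesis
    using that unfolding L2Y_eq_L2_norm by (simp add: L2_norm_minus_commute, blast)
qed

lemma twisted_korn_H1per:
  assumes H: "H1per u Du" and c: "\<And>j. \<bar>c$j\<bar> \<le> pi"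
  defines "w \<equiv> L2_norm cellY (twisted_sym_field c u Du)"
  shows "norm c * L2_norm cellY u \<le> 3 * w"
    and "L2_norm cellY Du \<le> 5 * w"
    and "L2_norm cellY (\<lambda>x. u x - integral cellY u) \<le> 30 * w"
proof -
  obtain \<phi> where u: "square_integrable cellY u" and Du: "square_integrable cellY Du"
    and \<phi>: "\<And>n. C2_periodic (\<phi> n)"
    and a: "(\<lambda>n. L2_norm cellY (\<lambda>x. u x - \<phi> n x)) \<longlonglongrightarrow> 0"
    and b: "(\<lambda>n. L2_norm cellY (\<lambda>x. Du x - grad3 (\<phi> n) x)) \<longlonglongrightarrow> 0"
    using H1per_approximation[OF H] by blast
  have \<phi>1: "C1_periodic (\<phi> n)" for n using \<phi> by (simp add: C2_periodic_def)
  have sq_\<phi>: "square_integrable cellY (\<phi> n)" and sq_grad: "square_integrable cellY (grad3 (\<phi> n))" for n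
    using \<phi>1[of n] continuous_on_grad3[OF \<phi>1]
    by (auto intro: square_integrable_cellY_continuous simp: C1_periodic_def)
  have approx: "L2_norm cellY (twisted_sym_field c (\<phi> n) (grad3 (\<phi> n)))
      \<le> w + (L2_norm cellY (\<lambda>x. Du x - grad3 (\<phi> n) x) + norm c * L2_norm cellY (\<lambda>x. u x - \<phi> n x))" for n
    unfolding w_def by (rule L2_norm_twisted_sym_field_approx[OF u Du \<phi>1])
  have err: "(\<lambda>n. L2_norm cellY (\<lambda>x. Du x - grad3 (\<phi> n) x) + norm c * L2_norm cellY (\<lambda>x. u x - \<phi> n x))
      \<longlonglongrightarrow> 0"
    using a b by (auto intro!: tendsto_eq_intros)
  show "norm c * L2_norm cellY u \<le> 3 * w"
  proof (rule le_of_approximations[OF _ twisted_korn_C2_periodic(1)[OF \<phi> c] approx _ _ err])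
    show "norm c * L2_norm cellY u \<le> norm c * L2_norm cellY (\<phi> n) + norm c * L2_norm cellY (\<lambda>x. u x - \<phi> n x)" for n
      using mult_left_mono[OF L2_norm_le_add_L2_norm_diff[OF cellY_lebesgue u sq_\<phi>], of "norm c"]
      by (simp add: algebra_simps)
    show "(\<lambda>n. norm c * L2_norm cellY (\<lambda>x. u x - \<phi> n x)) \<longlonglongrightarrow> 0"
      using a by (auto intro!: tendsto_eq_intros)
  qed simp
  show "L2_norm cellY Du \<le> 5 * w"
    by (rule le_of_approximations[OF L2_norm_le_add_L2_norm_diff[OF cellY_lebesgue Du sq_grad]
          twisted_korn_C2_periodic(2)[OF \<phi> c] approx _ b err]) simp
  show "L2_norm cellY (\<lambda>x. u x - integral cellY u) \<le> 30 * w"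
  proof (rule le_of_approximations[OF _ twisted_korn_C2_periodic(3)[OF \<phi> c] approx _ _ err])
    show "L2_norm cellY (\<lambda>x. u x - integral cellY u)
        \<le> L2_norm cellY (\<lambda>x. \<phi> n x - integral cellY (\<phi> n)) + 2 * L2_norm cellY (\<lambda>x. u x - \<phi> n x)" for n
      by (rule L2_norm_sub_integral_approx[OF cellY_lebesgue cellY_has_integral_one u sq_\<phi>])
    show "(\<lambda>n. 2 * L2_norm cellY (\<lambda>x. u x - \<phi> n x)) \<longlonglongrightarrow> 0"
      using a by (auto intro!: tendsto_eq_intros)
  qed simp
qed

theorem propositionA7:
  shows "\<exists>C>0. \<forall>u Du. H1per u Du \<longrightarrow>
     (\<forall>c \<in> cellY' - {0}.
        let w = (\<lambda>x. symm (Du x) + imul (Xchi c (u x))) in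
        L2Y u \<le> C / norm c * L2Y w \<and>
        L2Y Du \<le> C * L2Y w \<and>
        L2Y (\<lambda>x. u x - integral cellY u) \<le> C * L2Y w)"
proof (intro exI[of _ 30] conjI allI impI ballI)
  fix u Du c
  assume H: "H1per u Du" and c: "c \<in> cellY' - {0}"
  have "\<bar>c$j\<bar> \<le> pi" for j
    using c unfolding cellY'_def by (smt (verit) DiffD1 mem_Collect_eq)
  note korn = twisted_korn_H1per[OF H this]
  have w: "(\<lambda>x. symm (Du x) + imul (Xchi c (u x))) = twisted_sym_field c u Du"
    by (simp add: twisted_sym_field_def[abs_def])
  have "0 < norm c" and W: "0 \<le> L2_norm cellY (twisted_sym_field c u Du)"
    using c by (auto simp: L2_norm_nonneg)
  with korn(1) have "L2_norm cellY u \<le> 30 / norm c * L2_norm cellY (twisted_sym_field c u Du)"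
    by (simp add: field_simps)
  with korn(2,3) W show "let w = (\<lambda>x. symm (Du x) + imul (Xchi c (u x))) in
      L2Y u \<le> 30 / norm c * L2Y w \<and> L2Y Du \<le> 30 * L2Y w \<and>
      L2Y (\<lambda>x. u x - integral cellY u) \<le> 30 * L2Y w"
    unfolding Let_def w L2Y_eq_L2_norm by linarith
qed simp

end
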